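(* Assume $0<\zeta_3<\zeta_2<\zeta_1$, let $b,c,\nu,k,\alpha,\phi,s_0$ be as in the context, $\xi=x+ct$, $\eta=s_0\xi-bt$, $\eta_0\in\mathbb{R}$, and $$u(x,t)=\frac{4\phi(\xi)\Theta^2(\nu\xi+\alpha)+e^{2(\eta+\eta_0)}\Theta^2(\nu\xi-\alpha)\bigl(2\phi(\xi)\phi'(\xi)-\phi''(\xi)-b\bigr)}{4\Theta^2(\nu\xi+\alpha)+e^{2(\eta+\eta_0)}\Theta^2(\nu\xi-\alpha)\bigl(c+2\phi'(\xi)-2\phi(\xi)^2\bigr)}.$$ Then $$u(x,t)\to\begin{cases}\phi(\xi) & \text{as }\eta\to-\infty,\\ -\phi(\xi-2\nu^{-1}\alpha) & \text{as }\eta\to+\infty.\end{cases}$$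
   Context: $b=4\zeta_1\zeta_2\zeta_3$, $c=2(\zeta_1^2+\zeta_2^2+\zeta_3^2)$, $\nu=\sqrt{\zeta_1^2-\zeta_3^2}$, modulus $k=\sqrt{(\zeta_1^2-\zeta_2^2)/(\zeta_1^2-\zeta_3^2)}$, $\alpha\in(0,K)$ with $\mathrm{sn}(\alpha)=\sqrt{(\zeta_1-\zeta_3)/(\zeta_1+\zeta_2)}$, $\phi(x)=\frac{2(\zeta_1+\zeta_3)(\zeta_2+\zeta_3)}{(\zeta_1+\zeta_3)-(\zeta_1-\zeta_2)\mathrm{sn}^2(\nu x)}-\zeta_1-\zeta_2-\zeta_3$, and $s_0=\nu H'(2\alpha)/H(2\alpha)$. Here $K=K(k)$, $K'=K(\sqrt{1-k^2})$, $q=e^{-\pi K'/K}$, $H(x)=\theta_1(\frac{\pi x}{2K})$, $\Theta(x)=\theta_4(\frac{\pi x}{2K})$ with $\theta_1(y)=2\sum_{n\ge1}(-1)^{n-1}q^{(n-1/2)^2}\sin((2n-1)y)$, $\theta_4(y)=1+2\sum_{n\ge1}(-1)^nq^{n^2}\cos(2ny)$. *)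

theory Defs
  imports "HOL-Analysis.Analysis"
begin

definition ellK :: "real \<Rightarrow> real" where
  "ellK k = integral {0..pi/2} (\<lambda>t. 1 / sqrt (1 - k\<^sup>2 * (sin t)\<^sup>2))"

definition ellF :: "real \<Rightarrow> real \<Rightarrow> real" where
  "ellF k p = (if 0 \<le> p then integral {0..p} (\<lambda>t. 1 / sqrt (1 - k\<^sup>2 * (sin t)\<^sup>2))
               else - integral {p..0} (\<lambda>t. 1 / sqrt (1 - k\<^sup>2 * (sin t)\<^sup>2)))"

definition jam :: "real \<Rightarrow> real \<Rightarrow> real" where
  "jam k u = (THE p. ellF k p = u)"

definition jsn :: "real \<Rightarrow> real \<Rightarrow> real" where
  "jsn k u = sin (jam k u)"

definition theta1 :: "real \<Rightarrow> real \<Rightarrow> real" where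
  "theta1 q y = 2 * (\<Sum>n. let m = Suc n in
       (-1) ^ (m - 1) * q powr ((real m - 1/2)\<^sup>2) * sin ((2 * real m - 1) * y))"

definition theta4 :: "real \<Rightarrow> real \<Rightarrow> real" where
  "theta4 q y = 1 + 2 * (\<Sum>n. let m = Suc n in
       (-1) ^ m * q ^ (m\<^sup>2) * cos (2 * real m * y))"

definition nome :: "real \<Rightarrow> real" where
  "nome k = exp (- pi * ellK (sqrt (1 - k\<^sup>2)) / ellK k)"

definition jacH :: "real \<Rightarrow> real \<Rightarrow> real" where
  "jacH k x = theta1 (nome k) (pi * x / (2 * ellK k))"

definition jacTheta :: "real \<Rightarrow> real \<Rightarrow> real" where
  "jacTheta k x = theta4 (nome k) (pi * x / (2 * ellK k))"

end

theory Submission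
  imports Defs
begin

(*
  As eta tends to -infinity the exponential terms vanish and u tends to phi, provided Theta has
  no real zeros.  Positivity of theta4 for 0 < q < 1 is Jacobi's triple product: a finite version
  is the q-binomial theorem, and Tannery's theorem passes to the limit.

  As eta tends to +infinity, u tends to (2 phi phi' - phi'' - b) / (c + 2 phi' - 2 phi^2).  With
  X = sn(nu x) and W = X', phi is rational in X, and phi', phi'' are rational in X and W, where
  W^2 = (1 - X^2)(nu^2 - k^2 nu^2 X^2).  The addition theorem for sn, with sn(2 alpha) = nu/z1 and
  cn(2 alpha) dn(2 alpha) = z2 z3/z1^2, makes sn(nu x - 2 alpha) and hence phi(x - 2 alpha/nu)
  rational in X and W as well; the claimed limit then reduces to a polynomial identity modulo the
  relation for W^2.  The denominator is positive because phi'^2 is a quartic in phi which keeps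
  |2 phi'| below c - 2 phi^2 on the range of phi.
*)

section \<open>Gaussian binomial coefficients\<close>

definition q_pochhammer :: "real \<Rightarrow> nat \<Rightarrow> real" where
  "q_pochhammer Q n = (\<Prod>k=1..n. 1 - Q ^ k)"

fun gauss_binomial :: "real \<Rightarrow> nat \<Rightarrow> nat \<Rightarrow> real" where
  "gauss_binomial Q 0 i = (if i = 0 then 1 else 0)"
| "gauss_binomial Q (Suc N) 0 = 1"
| "gauss_binomial Q (Suc N) (Suc i) = gauss_binomial Q N (Suc i) + Q ^ (N - i) * gauss_binomial Q N i"

lemma gauss_binomial_eq_0: "N < i \<Longrightarrow> gauss_binomial Q N i = 0"
proof (induction N arbitrary: i)
  case (Suc N)
  then show ?case by (cases i) auto
qed simp

lemma gauss_binomial_0_right [simp]: "gauss_binomial Q N 0 = 1"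
  by (cases N) auto

lemma gauss_binomial_nonneg: "0 \<le> Q \<Longrightarrow> 0 \<le> gauss_binomial Q N i"
  by (induction Q N i rule: gauss_binomial.induct) auto

lemma q_pochhammer_0 [simp]: "q_pochhammer Q 0 = 1"
  by (simp add: q_pochhammer_def)

lemma q_pochhammer_Suc: "q_pochhammer Q (Suc n) = q_pochhammer Q n * (1 - Q ^ Suc n)"
  unfolding q_pochhammer_def by (simp add: prod.nat_ivl_Suc')

lemma q_pochhammer_pos: "0 < Q \<Longrightarrow> Q < 1 \<Longrightarrow> 0 < q_pochhammer Q n"
  unfolding q_pochhammer_def by (intro prod_pos) (auto simp: power_less_one_iff)

lemma gauss_binomial_eq:
  assumes "0 < Q" "Q < 1"
  shows "i \<le> N \<Longrightarrow> gauss_binomial Q N i = q_pochhammer Q N / (q_pochhammer Q i * q_pochhammer Q (N - i))"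
proof (induction N arbitrary: i)
  case 0
  then show ?case by simp
next
  case (Suc N)
  have pos: "0 < q_pochhammer Q n" for n
    using q_pochhammer_pos assms by auto
  show ?case
  proof (cases i)
    case 0
    then show ?thesis using pos[of "Suc N"] by simp
  next
    case (Suc j)
    show ?thesis
    proof (cases "j = N")
      case True
      have "gauss_binomial Q N N = 1"
        using Suc.IH[of N] pos[of N] by simp
      then show ?thesis
        using Suc True pos[of "Suc N"] by (simp add: gauss_binomial_eq_0)
    next
      case False
      then have "j < N"
        using Suc Suc.prems by simp
      then obtain d where d: "N - j = Suc d"
        by (metis Suc_diff_Suc)
      have N: "N = j + Suc d"
        using d \<open>j < N\<close> by simp
      have "gauss_binomial Q (Suc N) i = gauss_binomial Q N (Suc j) + Q ^ Suc d * gauss_binomial Q N j"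
        using Suc d by simp
      also have "\<dots> = q_pochhammer Q N / (q_pochhammer Q j * (1 - Q ^ Suc j) * q_pochhammer Q d)
          + Q ^ Suc d * (q_pochhammer Q N / (q_pochhammer Q j * (q_pochhammer Q d * (1 - Q ^ Suc d))))"
      proof -
        have "N - Suc j = d"
          using d by simp
        then show ?thesis
          using Suc.IH[of j] Suc.IH[of "Suc j"] \<open>j < N\<close> d by (simp add: q_pochhammer_Suc)
      qed
      also have "\<dots> = q_pochhammer Q N * (1 - Q ^ Suc N)
          / (q_pochhammer Q j * (1 - Q ^ Suc j) * (q_pochhammer Q d * (1 - Q ^ Suc d)))"
      proof -
        have "Q ^ Suc j < 1" "Q ^ Suc d < 1"
          using assms by (intro power_Suc_less_one; simp)+
        then have "1 - Q ^ Suc j \<noteq> 0" "1 - Q ^ Suc d \<noteq> 0"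
          by auto
        moreover have "q_pochhammer Q j \<noteq> 0" "q_pochhammer Q d \<noteq> 0"
          using pos by (metis less_irrefl)+
        moreover have "Q ^ Suc N = Q ^ Suc j * Q ^ Suc d"
          using N by (simp add: power_add[symmetric])
        ultimately show ?thesis
          using assms by (simp add: divide_simps) (simp add: algebra_simps)
      qed
      also have "\<dots> = q_pochhammer Q (Suc N) / (q_pochhammer Q i * q_pochhammer Q (Suc N - i))"
        using Suc d by (simp add: q_pochhammer_Suc mult.assoc)
      finally show ?thesis .
    qed
  qed
qed

lemma exp_le_one_minus:
  fixes x r :: real
  assumes "0 \<le> x" "x \<le> r" "r < 1"
  shows "exp (- (x / (1 - r))) \<le> 1 - x"
proof -
  have "1 + x / (1 - x) \<le> exp (x / (1 - x))"
    by (rule exp_ge_add_one_self)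
  then have "exp (- (x / (1 - x))) \<le> 1 - x"
    using assms by (simp add: exp_minus field_simps)
  moreover have "x / (1 - x) \<le> x / (1 - r)"
    using assms by (intro divide_left_mono) auto
  ultimately show ?thesis
    by (smt (verit, best) exp_le_cancel_iff)
qed

lemma exp_le_prod_one_minus:
  fixes x :: "nat \<Rightarrow> real"
  assumes "finite A" "\<And>j. j \<in> A \<Longrightarrow> 0 \<le> x j \<and> x j \<le> r" "r < 1" "sum x A \<le> S"
  shows "exp (- (S / (1 - r))) \<le> (\<Prod>j\<in>A. 1 - x j)"
proof -
  have "exp (- (S / (1 - r))) \<le> exp (- (sum x A / (1 - r)))"
    using assms by (intro exp_mono le_imp_neg_le divide_right_mono) auto
  also have "\<dots> = (\<Prod>j\<in>A. exp (- (x j / (1 - r))))"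
    using assms(1) by (simp add: exp_sum[symmetric] sum_divide_distrib sum_negf)
  also have "\<dots> \<le> (\<Prod>j\<in>A. 1 - x j)"
    using assms by (intro prod_mono) (auto intro: exp_le_one_minus)
  finally show ?thesis .
qed

lemma sum_power_le_geometric:
  fixes Q :: real
  assumes "finite A" "0 \<le> Q" "Q < 1"
  shows "(\<Sum>k\<in>A. Q ^ k) \<le> 1 / (1 - Q)"
proof -
  have "(\<Sum>k\<in>A. Q ^ k) \<le> (\<Sum>k. Q ^ k)"
    using assms by (intro sum_le_suminf summable_geometric) auto
  also have "\<dots> = 1 / (1 - Q)"
    using assms by (intro suminf_geometric) auto
  finally show ?thesis .
qed

lemma exp_le_prod_one_minus_powers:
  fixes Q :: real and e :: "nat \<Rightarrow> nat"
  assumes "0 \<le> Q" "Q < 1" "inj_on e A" "finite A" "\<And>j. j \<in> A \<Longrightarrow> 0 < e j"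
  shows "exp (- (1 / (1 - Q)^2)) \<le> (\<Prod>j\<in>A. 1 - Q ^ e j)"
proof -
  have "(\<Sum>j\<in>A. Q ^ e j) = (\<Sum>k\<in>e ` A. Q ^ k)"
    using assms(3) by (simp add: sum.reindex)
  also have "\<dots> \<le> 1 / (1 - Q)"
    using assms by (intro sum_power_le_geometric) auto
  moreover have "0 \<le> Q ^ e j \<and> Q ^ e j \<le> Q" if "j \<in> A" for j
    using assms that power_decreasing[of 1 "e j" Q] by (simp add: Suc_le_eq)
  ultimately have "exp (- ((1 / (1 - Q)) / (1 - Q))) \<le> (\<Prod>j\<in>A. 1 - Q ^ e j)"
    using assms by (intro exp_le_prod_one_minus[where r = Q]) auto
  then show ?thesis
    by (simp add: power2_eq_square)
qed

lemma q_pochhammer_ge: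
  assumes "0 \<le> Q" "Q < 1"
  shows "exp (- (1 / (1 - Q)^2)) \<le> q_pochhammer Q n"
  unfolding q_pochhammer_def
  using exp_le_prod_one_minus_powers[of Q id "{1..n}"] assms by simp

lemma q_pochhammer_antimono:
  assumes "0 \<le> Q" "Q < 1" "m \<le> n"
  shows "q_pochhammer Q n \<le> q_pochhammer Q m"
proof -
  have "q_pochhammer Q (Suc n) \<le> q_pochhammer Q n" for n
  proof -
    have "0 \<le> q_pochhammer Q n"
      using q_pochhammer_ge[OF assms(1,2), of n] by (meson exp_gt_zero less_le_trans less_imp_le)
    then show ?thesis
      using assms by (simp add: q_pochhammer_Suc mult_left_le)
  qed
  then show ?thesis
    using assms(3) by (rule decseq_SucI[unfolded decseq_def, rule_format])
qed

lemma q_pochhammer_tendsto: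
  assumes "0 \<le> Q" "Q < 1"
  obtains P where "q_pochhammer Q \<longlonglongrightarrow> P" "0 < P"
proof -
  have "decseq (q_pochhammer Q)"
    using q_pochhammer_antimono[OF assms] by (auto simp: decseq_def)
  moreover have "bdd_below (range (q_pochhammer Q))"
    using q_pochhammer_ge[OF assms] by (intro bdd_belowI[of _ "exp (- (1 / (1 - Q)^2))"]) auto
  ultimately have "q_pochhammer Q \<longlonglongrightarrow> (INF n. q_pochhammer Q n)"
    by (intro LIMSEQ_decseq_INF)
  moreover have "exp (- (1 / (1 - Q)^2)) \<le> (INF n. q_pochhammer Q n)"
    using q_pochhammer_ge[OF assms] by (intro cINF_greatest) auto
  ultimately show ?thesis
    using that by (meson exp_gt_zero less_le_trans)
qed

lemma gauss_binomial_le: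
  assumes "0 < Q" "Q < 1"
  shows "gauss_binomial Q N i \<le> exp (1 / (1 - Q)^2)"
proof (cases "i \<le> N")
  case True
  have pos: "0 < q_pochhammer Q n" for n
    using q_pochhammer_pos assms by auto
  have "q_pochhammer Q N \<le> q_pochhammer Q (N - i)"
    using assms by (intro q_pochhammer_antimono) auto
  then have "q_pochhammer Q N / (q_pochhammer Q i * q_pochhammer Q (N - i)) \<le> 1 / q_pochhammer Q i"
    using pos[of i] pos[of "N - i"] pos[of N] by (simp add: field_simps)
  then have "gauss_binomial Q N i \<le> 1 / q_pochhammer Q i"
    using gauss_binomial_eq[OF assms True] by simp
  also have "\<dots> \<le> 1 / exp (- (1 / (1 - Q)^2))"
    using q_pochhammer_ge[of Q i] assms pos[of i] by (intro divide_left_mono) auto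
  finally show ?thesis
    by (simp add: exp_minus inverse_eq_divide)
qed (use gauss_binomial_eq_0 in simp)

section \<open>A finite form of the Jacobi triple product\<close>

lemma q_binomial_theorem:
  fixes x y :: complex
  shows "(\<Prod>k<N. x + of_real (q ^ (2 * k)) * y) =
         (\<Sum>i\<le>N. of_real (q ^ (i * (i - 1)) * gauss_binomial (q^2) N i) * x ^ (N - i) * y ^ i)"
proof (induction N)
  case (Suc N)
  define c :: "nat \<Rightarrow> complex" where "c i = of_real (q ^ (i * (i - 1)) * gauss_binomial (q^2) N i)" for i
  have "(\<Prod>k<Suc N. x + of_real (q ^ (2 * k)) * y)
      = (\<Sum>i\<le>N. c i * x ^ (N - i) * y ^ i) * (x + of_real (q ^ (2 * N)) * y)"
    using Suc by (simp add: c_def)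
  also have "\<dots> = (\<Sum>i\<le>N. c i * x ^ (Suc N - i) * y ^ i)
      + (\<Sum>i\<le>N. c i * of_real (q ^ (2 * N)) * x ^ (N - i) * y ^ Suc i)"
    unfolding distrib_left sum_distrib_right
    by (intro arg_cong2[where f = "(+)"] sum.cong) (auto simp: Suc_diff_le algebra_simps)
  also have "(\<Sum>i\<le>N. c i * x ^ (Suc N - i) * y ^ i)
      = x ^ Suc N + (\<Sum>j\<le>N. c (Suc j) * x ^ (N - j) * y ^ Suc j)"
  proof -
    have "(\<Sum>i\<le>N. c i * x ^ (Suc N - i) * y ^ i) = (\<Sum>i\<le>Suc N. c i * x ^ (Suc N - i) * y ^ i)"
      by (simp add: c_def gauss_binomial_eq_0)
    also have "\<dots> = (\<Sum>j\<le>N. c (Suc j) * x ^ (N - j) * y ^ Suc j) + c 0 * x ^ Suc N"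
      by (subst sum.atMost_Suc_shift) simp
    finally show ?thesis
      by (simp add: c_def)
  qed
  also have "(\<Sum>i\<le>N. c i * of_real (q ^ (2 * N)) * x ^ (N - i) * y ^ Suc i) =
      (\<Sum>j\<le>N. of_real (q ^ (Suc j * j) * ((q^2) ^ (N - j) * gauss_binomial (q^2) N j))
                 * x ^ (N - j) * y ^ Suc j)"
  proof (rule sum.cong[OF refl])
    fix j
    assume "j \<in> {..N}"
    then have "Suc j * j + 2 * (N - j) = j * (j - 1) + 2 * N"
      by (cases j) (auto simp: algebra_simps)
    then have "q ^ (Suc j * j) * (q^2) ^ (N - j) = q ^ (j * (j - 1)) * q ^ (2 * N)"
      by (metis power_mult[symmetric] power_add[symmetric])
    then have "q ^ (Suc j * j) * ((q^2) ^ (N - j) * g) = q ^ (j * (j - 1)) * g * q ^ (2 * N)" for g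
      by (simp only: ac_simps)
    then have "of_real (q ^ (Suc j * j) * ((q^2) ^ (N - j) * gauss_binomial (q^2) N j))
        = c j * (of_real (q ^ (2 * N)) :: complex)"
      unfolding c_def by (simp only: of_real_mult)
    then show "c j * of_real (q ^ (2 * N)) * x ^ (N - j) * y ^ Suc j
        = of_real (q ^ (Suc j * j) * ((q^2) ^ (N - j) * gauss_binomial (q^2) N j)) * x ^ (N - j) * y ^ Suc j"
      by simp
  qed
  also have "x ^ Suc N + (\<Sum>j\<le>N. c (Suc j) * x ^ (N - j) * y ^ Suc j) +
      (\<Sum>j\<le>N. of_real (q ^ (Suc j * j) * ((q^2) ^ (N - j) * gauss_binomial (q^2) N j))
                 * x ^ (N - j) * y ^ Suc j)
      = (\<Sum>i\<le>Suc N. of_real (q ^ (i * (i - 1)) * gauss_binomial (q^2) (Suc N) i) * x ^ (Suc N - i) * y ^ i)"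
    by (subst sum.atMost_Suc_shift) (simp add: c_def algebra_simps sum.distrib)
  finally show ?case .
qed simp

lemma prod_lessThan_double:
  fixes n :: nat
  shows "(\<Prod>k<n + n. f k) = (\<Prod>k<n. f k) * (\<Prod>j<n. f (n + j))"
proof -
  have "(\<Prod>k<n + n. f k) = prod f {0..<n} * prod f {n..<n + n}"
    by (simp add: lessThan_atLeast0 prod.atLeastLessThan_concat)
  also have "prod f {n..<n + n} = (\<Prod>j<n. f (n + j))"
    using prod.shift_bounds_nat_ivl[of f 0 n n] by (simp add: lessThan_atLeast0 add.commute)
  finally show ?thesis
    by (simp add: lessThan_atLeast0)
qed

lemma triple_product_upper_half:
  fixes z :: complex
  assumes "1 \<le> n"
  shows "(\<Prod>j<n. of_real (q ^ (2 * n - 1)) + of_real (q ^ (2 * (n + j))) * z)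
       = of_real (q ^ ((2 * n - 1) * n)) * (\<Prod>j<n. 1 + of_real (q ^ (2 * j + 1)) * z)"
proof -
  have "of_real (q ^ (2 * n - 1)) + of_real (q ^ (2 * (n + j))) * z
      = of_real (q ^ (2 * n - 1)) * (1 + of_real (q ^ (2 * j + 1)) * z)" for j
  proof -
    have "2 * (n + j) = (2 * n - 1) + (2 * j + 1)"
      using assms by simp
    then have "q ^ (2 * (n + j)) = q ^ (2 * n - 1) * q ^ (2 * j + 1)"
      by (simp only: power_add)
    then show ?thesis
      by (simp add: algebra_simps)
  qed
  then show ?thesis
    by (simp add: prod.distrib power_mult)
qed

lemma triple_product_lower_half:
  fixes z :: complex
  shows "(\<Prod>k<n. of_real (q ^ (2 * n - 1)) + of_real (q ^ (2 * k)) * z)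
       = of_real (q ^ (n * (n - 1))) * (\<Prod>j<n. z + of_real (q ^ (2 * j + 1)))"
proof -
  have "of_real (q ^ (2 * n - 1)) + of_real (q ^ (2 * k)) * z
      = of_real (q ^ (2 * k)) * (of_real (q ^ (2 * (n - Suc k) + 1)) + z)" if "k < n" for k
  proof -
    have "2 * n - 1 = 2 * k + (2 * (n - Suc k) + 1)"
      using that by simp
    then have "q ^ (2 * n - 1) = q ^ (2 * k) * q ^ (2 * (n - Suc k) + 1)"
      by (simp only: power_add)
    then show ?thesis
      by (simp add: algebra_simps)
  qed
  then have "(\<Prod>k<n. of_real (q ^ (2 * n - 1)) + of_real (q ^ (2 * k)) * z)
      = of_real (\<Prod>k<n. q ^ (2 * k)) * (\<Prod>k<n. of_real (q ^ (2 * (n - Suc k) + 1)) + z)"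
    by (simp add: prod.distrib)
  also have "(\<Prod>k<n. of_real (q ^ (2 * (n - Suc k) + 1)) + z) = (\<Prod>j<n. z + of_real (q ^ (2 * j + 1)))"
    using prod.nat_diff_reindex[of "\<lambda>j. of_real (q ^ (2 * j + 1)) + z" n] by (simp add: add.commute)
  also have "(\<Prod>k<n. q ^ (2 * k)) = q ^ (n * (n - 1))"
  proof -
    have "(\<Sum>k<n. 2 * k) = n * (n - 1)"
      by (induction n) (auto simp: algebra_simps)
    then show ?thesis
      by (simp add: power_sum[symmetric])
  qed
  finally show ?thesis
    by simp
qed

lemma triple_product_exponent:
  fixes i n :: nat
  assumes "i \<le> 2 * n" "1 \<le> n"
  shows "i * (i - 1) + (2 * n - 1) * (2 * n - i) = ((i - n)^2 + (n - i)^2) + ((2 * n - 1) * n + n * (n - 1))"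
proof (cases "i \<le> n")
  case True
  then obtain m where m: "n = i + m"
    using le_Suc_ex by blast
  show ?thesis
    using assms unfolding m by (cases i; cases m) (auto simp: algebra_simps power2_eq_square)
next
  case False
  then obtain m where m: "i = n + m"
    using le_Suc_ex[of n i] by auto
  obtain r where r: "n = m + r"
    using assms m le_Suc_ex[of m n] by auto
  show ?thesis
  proof (cases r)
    case 0
    then obtain t where "m = Suc t"
      using assms r by (cases m) auto
    then show ?thesis
      unfolding m r 0 by (simp add: algebra_simps power2_eq_square)
  next
    case (Suc s)
    show ?thesis
      unfolding m r Suc by (simp add: algebra_simps power2_eq_square)
  qed
qed

lemma finite_triple_product:
  fixes z :: complex
  assumes "q \<noteq> 0"
  shows "(\<Prod>j<n. (1 + of_real (q ^ (2 * j + 1)) * z) * (z + of_real (q ^ (2 * j + 1)))) =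
         (\<Sum>i\<le>2 * n. of_real (gauss_binomial (q^2) (2 * n) i * q ^ ((i - n)^2 + (n - i)^2)) * z ^ i)"
proof (cases "n = 0")
  case False
  then have n: "1 \<le> n"
    by simp
  \<comment> \<open>the q-binomial theorem with 2n factors at x = q^(2n-1): the first n factors are the
    z + q^(2j+1) and the last n the 1 + q^(2j+1) z, up to the power E of q\<close>
  define x :: complex where "x = of_real (q ^ (2 * n - 1))"
  define E where "E = (2 * n - 1) * n + n * (n - 1)"
  have "of_real (q ^ E) * (\<Prod>j<n. (1 + of_real (q ^ (2 * j + 1)) * z) * (z + of_real (q ^ (2 * j + 1))))
      = of_real (q ^ (n * (n - 1))) * (\<Prod>j<n. z + of_real (q ^ (2 * j + 1)))
        * (of_real (q ^ ((2 * n - 1) * n)) * (\<Prod>j<n. 1 + of_real (q ^ (2 * j + 1)) * z))"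
    unfolding prod.distrib E_def power_add of_real_mult by (simp only: ac_simps)
  also have "\<dots> = (\<Prod>k<n + n. x + of_real (q ^ (2 * k)) * z)"
    unfolding prod_lessThan_double x_def triple_product_upper_half[OF n] triple_product_lower_half ..
  also have "\<dots> = (\<Sum>i\<le>2 * n. of_real (q ^ (i * (i - 1)) * gauss_binomial (q^2) (2 * n) i)
                                 * x ^ (2 * n - i) * z ^ i)"
    using q_binomial_theorem[where x = x and q = q and N = "2 * n" and y = z] by (simp add: mult_2)
  also have "\<dots> = of_real (q ^ E) * (\<Sum>i\<le>2 * n.
      of_real (gauss_binomial (q^2) (2 * n) i * q ^ ((i - n)^2 + (n - i)^2)) * z ^ i)"
    unfolding sum_distrib_left
  proof (rule sum.cong[OF refl])
    fix i
    assume "i \<in> {..2 * n}"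
    then have "i * (i - 1) + (2 * n - 1) * (2 * n - i) = ((i - n)^2 + (n - i)^2) + E"
      unfolding E_def using n by (intro triple_product_exponent) auto
    then have "q ^ (i * (i - 1)) * (q ^ (2 * n - 1)) ^ (2 * n - i) = q ^ ((i - n)^2 + (n - i)^2) * q ^ E"
      by (metis power_add power_mult)
    then have r: "q ^ (i * (i - 1)) * g * (q ^ (2 * n - 1)) ^ (2 * n - i)
        = q ^ E * (g * q ^ ((i - n)^2 + (n - i)^2))" for g
      by (simp only: ac_simps)
    have "of_real (q ^ (i * (i - 1)) * gauss_binomial (q^2) (2 * n) i) * x ^ (2 * n - i) * z ^ i
        = of_real (q ^ (i * (i - 1)) * gauss_binomial (q^2) (2 * n) i * (q ^ (2 * n - 1)) ^ (2 * n - i)) * z ^ i"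
      unfolding x_def of_real_mult of_real_power by (simp only: mult.assoc)
    also have "\<dots> = of_real (q ^ E) * (of_real (gauss_binomial (q^2) (2 * n) i * q ^ ((i - n)^2 + (n - i)^2)) * z ^ i)"
      unfolding r of_real_mult by (simp only: mult.assoc)
    finally show "of_real (q ^ (i * (i - 1)) * gauss_binomial (q^2) (2 * n) i) * x ^ (2 * n - i) * z ^ i
        = of_real (q ^ E) * (of_real (gauss_binomial (q^2) (2 * n) i * q ^ ((i - n)^2 + (n - i)^2)) * z ^ i)" .
  qed
  finally have "of_real (q ^ E) * (\<Prod>j<n. (1 + of_real (q ^ (2 * j + 1)) * z) * (z + of_real (q ^ (2 * j + 1))))
      = of_real (q ^ E) * (\<Sum>i\<le>2 * n.
          of_real (gauss_binomial (q^2) (2 * n) i * q ^ ((i - n)^2 + (n - i)^2)) * z ^ i)" .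
  moreover have "of_real (q ^ E) \<noteq> (0 :: complex)"
    using assms by simp
  ultimately show ?thesis
    by (rule mult_left_cancel[THEN iffD1, rotated])
qed simp

lemma finite_triple_product_cos:
  fixes q y :: real
  assumes "q \<noteq> 0"
  shows "(\<Prod>j<n. 1 - 2 * q ^ (2 * j + 1) * cos (2 * y) + q ^ (4 * j + 2)) =
    (\<Sum>i\<le>2 * n. gauss_binomial (q^2) (2 * n) i * q ^ ((i - n)^2 + (n - i)^2) * (-1) ^ (i + n)
                   * cos (2 * (real i - real n) * y))"
proof -
  define z :: complex where "z = - cis (2 * y)"
  define R where "R = (\<Prod>j<n. 1 - 2 * q ^ (2 * j + 1) * cos (2 * y) + q ^ (4 * j + 2))"
  have factor: "(1 + of_real a * z) * (z + of_real a) = z * of_real (1 - 2 * a * cos (2 * y) + a^2)" for a :: real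
  proof -
    have "1 + cis (2 * t) = 2 * of_real (cos t) * cis t" for t
      by (simp add: complex_eq_iff cos_double_cos sin_double power2_eq_square)
    from this[of "2 * y"] have h: "1 + z * z = - 2 * of_real (cos (2 * y)) * z"
      unfolding z_def by (simp add: cis_mult)
    have "(1 + of_real a * z) * (z + of_real a) = z + of_real a ^ 2 * z + of_real a * (1 + z * z)"
      by (simp add: algebra_simps power2_eq_square)
    also have "\<dots> = z * of_real (1 - 2 * a * cos (2 * y) + a^2)"
      unfolding h by (simp add: algebra_simps)
    finally show ?thesis .
  qed
  have "(q ^ (2 * j + 1))^2 = q ^ (4 * j + 2)" for j
  proof -
    have "4 * j + 2 = (2 * j + 1) * 2"
      by simp
    then show ?thesis
      by (simp only: power_mult)
  qed
  then have "(\<Prod>j<n. (1 + of_real (q ^ (2 * j + 1)) * z) * (z + of_real (q ^ (2 * j + 1))))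
      = (\<Prod>j<n. z * of_real (1 - 2 * q ^ (2 * j + 1) * cos (2 * y) + q ^ (4 * j + 2)))"
    by (simp only: factor)
  also have "\<dots> = z ^ n * of_real R"
    unfolding R_def by (simp add: prod.distrib)
  finally have eq: "z ^ n * of_real R
      = (\<Sum>i\<le>2 * n. of_real (gauss_binomial (q^2) (2 * n) i * q ^ ((i - n)^2 + (n - i)^2)) * z ^ i)"
    using finite_triple_product[OF assms] by simp
  define w :: complex where "w = (-1) ^ n * cis (- (real n * (2 * y)))"
  have zpow: "z ^ i = (-1) ^ i * cis (real i * (2 * y))" for i
    unfolding z_def power_minus[of "cis (2 * y)"] Complex.DeMoivre ..
  have "(-1) ^ n * (-1) ^ n = (1::complex)"
    by (simp flip: power_add)
  then have zw: "z ^ n * w = 1"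
    unfolding zpow w_def by (simp add: cis_mult algebra_simps)
  have ziw: "z ^ i * w = (-1) ^ (i + n) * cis (2 * (real i - real n) * y)" for i
  proof -
    have "z ^ i * w = ((-1) ^ i * (-1) ^ n) * (cis (real i * (2 * y)) * cis (- (real n * (2 * y))))"
      unfolding zpow w_def by (simp add: algebra_simps)
    also have "\<dots> = (-1) ^ (i + n) * cis (2 * (real i - real n) * y)"
      by (simp add: cis_mult power_add algebra_simps)
    finally show ?thesis .
  qed
  have "of_real R = (z ^ n * of_real R) * w"
    using zw by (simp add: algebra_simps)
  also have "\<dots> = (\<Sum>i\<le>2 * n. of_real (gauss_binomial (q^2) (2 * n) i * q ^ ((i - n)^2 + (n - i)^2)) * (z ^ i * w))"
    unfolding eq sum_distrib_right by (simp add: mult.assoc)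
  finally have "R = Re (\<Sum>i\<le>2 * n. of_real (gauss_binomial (q^2) (2 * n) i * q ^ ((i - n)^2 + (n - i)^2)) * (z ^ i * w))"
    by (metis Re_complex_of_real)
  also have "\<dots> = (\<Sum>i\<le>2 * n. gauss_binomial (q^2) (2 * n) i * q ^ ((i - n)^2 + (n - i)^2) * (-1) ^ (i + n)
                                * cos (2 * (real i - real n) * y))"
    unfolding Re_sum ziw by (intro sum.cong) (auto simp: Re_complex_of_real)
  finally show ?thesis
    unfolding R_def .
qed

lemma sum_atMost_double_fold:
  fixes f :: "nat \<Rightarrow> 'a::comm_monoid_add"
  shows "(\<Sum>i\<le>2 * n. f i) = (\<Sum>m\<le>n. f (n + m) + (if m = 0 then 0 else f (n - m)))"
proof -
  have "{..2 * n} = {..<n} \<union> {n..n + n}"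
    by auto
  then have "(\<Sum>i\<le>2 * n. f i) = (\<Sum>i<n. f i) + (\<Sum>i\<in>{n..n + n}. f i)"
    by (metis finite_atLeastAtMost finite_lessThan ivl_disj_int_one(4) sum.union_disjoint)
  also have "(\<Sum>i\<in>{n..n + n}. f i) = (\<Sum>m\<le>n. f (n + m))"
    using sum.shift_bounds_cl_nat_ivl[of f 0 n n] by (simp add: atLeast0AtMost add.commute)
  also have "(\<Sum>i<n. f i) = (\<Sum>m\<le>n. if m = 0 then 0 else f (n - m))"
  proof -
    have "(\<Sum>i<n. f i) = (\<Sum>m<n. f (n - Suc m))"
      by (rule sum.nat_diff_reindex[symmetric])
    then show ?thesis
      by (subst sum.atMost_shift) simp
  qed
  finally show ?thesis
    by (simp add: sum.distrib add.commute)
qed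

lemma finite_triple_product_theta4:
  fixes q y :: real
  assumes "q \<noteq> 0"
  shows "(\<Prod>j<n. 1 - 2 * q ^ (2 * j + 1) * cos (2 * y) + q ^ (4 * j + 2)) =
    (\<Sum>m\<le>n. (gauss_binomial (q^2) (2 * n) (n + m) + (if m = 0 then 0 else gauss_binomial (q^2) (2 * n) (n - m)))
              * ((-1) ^ m * q ^ (m^2) * cos (2 * real m * y)))"
proof -
  define b where "b m = (-1) ^ m * q ^ (m^2) * cos (2 * real m * y)" for m :: nat
  define f where "f i = gauss_binomial (q^2) (2 * n) i * q ^ ((i - n)^2 + (n - i)^2) * (-1) ^ (i + n)
                        * cos (2 * (real i - real n) * y)" for i
  have "f (n + m) = gauss_binomial (q^2) (2 * n) (n + m) * b m" for m
  proof -
    have "(-1::real) ^ (n + m + n) = (-1) ^ m"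
      by (simp add: power_add flip: mult_2)
    then show ?thesis
      unfolding f_def b_def by (simp add: mult_ac)
  qed
  moreover have "f (n - m) = gauss_binomial (q^2) (2 * n) (n - m) * b m" if "m \<le> n" for m
  proof -
    have "(-1::real) ^ (n - m + n) = (-1) ^ m"
    proof -
      have "n - m + n = 2 * (n - m) + m"
        using that by simp
      then show ?thesis
        by (simp only: power_add power_mult) simp
    qed
    moreover have "2 * (real (n - m) - real n) * y = - (2 * real m * y)"
      using that by (simp add: of_nat_diff algebra_simps)
    ultimately show ?thesis
      unfolding f_def b_def using that by (simp add: mult_ac)
  qed
  ultimately have "(\<Sum>i\<le>2 * n. f i) = (\<Sum>m\<le>n. (gauss_binomial (q^2) (2 * n) (n + m)
      + (if m = 0 then 0 else gauss_binomial (q^2) (2 * n) (n - m))) * b m)"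
    unfolding sum_atMost_double_fold by (intro sum.cong) (auto simp: distrib_right)
  then show ?thesis
    unfolding f_def b_def finite_triple_product_cos[OF assms] .
qed

section \<open>Positivity of theta4\<close>

lemma theta4_partial_product_ge:
  fixes q y :: real
  assumes "0 < q" "q < 1"
  shows "exp (- (1 / (1 - q)^2))^2 \<le> (\<Prod>j<n. 1 - 2 * q ^ (2 * j + 1) * cos (2 * y) + q ^ (4 * j + 2))"
proof -
  have "exp (- (1 / (1 - q)^2)) \<le> (\<Prod>j<n. 1 - q ^ (2 * j + 1))"
    using assms by (intro exp_le_prod_one_minus_powers) (auto simp: inj_on_def)
  then have "exp (- (1 / (1 - q)^2))^2 \<le> (\<Prod>j<n. 1 - q ^ (2 * j + 1))^2"
    by (intro power_mono) auto
  also have "\<dots> = (\<Prod>j<n. (1 - q ^ (2 * j + 1))^2)"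
    by (simp add: prod_power_distrib)
  also have "\<dots> \<le> (\<Prod>j<n. 1 - 2 * q ^ (2 * j + 1) * cos (2 * y) + q ^ (4 * j + 2))"
  proof (rule prod_mono)
    fix j :: nat
    have "4 * j + 2 = (2 * j + 1) * 2"
      by simp
    then have "q ^ (4 * j + 2) = (q ^ (2 * j + 1))^2"
      by (simp only: power_mult)
    moreover have "(1 - t)^2 \<le> 1 - 2 * t * cos (2 * y) + t^2" if "0 \<le> t" for t :: real
      using mult_left_le[of "cos (2 * y)" t] that by (simp add: power2_diff algebra_simps)
    ultimately show "0 \<le> (1 - q ^ (2 * j + 1))^2 \<and>
        (1 - q ^ (2 * j + 1))^2 \<le> 1 - 2 * q ^ (2 * j + 1) * cos (2 * y) + q ^ (4 * j + 2)"
      using assms by simp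
  qed
  finally show ?thesis .
qed

lemma gauss_binomial_central_tendsto:
  assumes "0 < Q" "Q < 1" "q_pochhammer Q \<longlonglongrightarrow> P" "0 < P"
  shows "(\<lambda>n. gauss_binomial Q (2 * n) (n + m)) \<longlonglongrightarrow> 1 / P"
    and "(\<lambda>n. gauss_binomial Q (2 * n) (n - m)) \<longlonglongrightarrow> 1 / P"
proof -
  have "(\<lambda>n. q_pochhammer Q (2 * n)) \<longlonglongrightarrow> P"
    using LIMSEQ_subseq_LIMSEQ[OF assms(3), of "\<lambda>n. 2 * n"] by (simp add: strict_mono_def o_def)
  moreover have "(\<lambda>n. q_pochhammer Q (n + m)) \<longlonglongrightarrow> P"
    by (rule LIMSEQ_ignore_initial_segment[OF assms(3)])
  moreover have "(\<lambda>n. q_pochhammer Q (n - m)) \<longlonglongrightarrow> P"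
    by (rule filterlim_compose[OF assms(3) filterlim_minus_const_nat_at_top])
  ultimately have "(\<lambda>n. q_pochhammer Q (2 * n) / (q_pochhammer Q (n + m) * q_pochhammer Q (n - m)))
      \<longlonglongrightarrow> P / (P * P)"
    using assms(4) by (intro tendsto_divide tendsto_mult) auto
  then have lim: "(\<lambda>n. q_pochhammer Q (2 * n) / (q_pochhammer Q (n + m) * q_pochhammer Q (n - m)))
      \<longlonglongrightarrow> 1 / P"
    using assms(4) by simp
  have "eventually (\<lambda>n. q_pochhammer Q (2 * n) / (q_pochhammer Q (n + m) * q_pochhammer Q (n - m))
      = gauss_binomial Q (2 * n) (n + m)) sequentially"
    using gauss_binomial_eq[OF assms(1,2), of "n + m" "2 * n" for n]
    by (intro eventually_sequentiallyI[of m]) (simp add: mult_2)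
  then show "(\<lambda>n. gauss_binomial Q (2 * n) (n + m)) \<longlonglongrightarrow> 1 / P"
    by (rule Lim_transform_eventually[OF lim])
  have "eventually (\<lambda>n. q_pochhammer Q (2 * n) / (q_pochhammer Q (n + m) * q_pochhammer Q (n - m))
      = gauss_binomial Q (2 * n) (n - m)) sequentially"
  proof (rule eventually_sequentiallyI[of m])
    fix n
    assume "m \<le> n"
    then have "2 * n - (n - m) = n + m"
      by simp
    then show "q_pochhammer Q (2 * n) / (q_pochhammer Q (n + m) * q_pochhammer Q (n - m))
        = gauss_binomial Q (2 * n) (n - m)"
      using gauss_binomial_eq[OF assms(1,2), of "n - m" "2 * n"] by (simp add: mult.commute)
  qed
  then show "(\<lambda>n. gauss_binomial Q (2 * n) (n - m)) \<longlonglongrightarrow> 1 / P"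
    by (rule Lim_transform_eventually[OF lim])
qed

lemma summable_power_square:
  fixes q :: real
  assumes "0 \<le> q" "q < 1"
  shows "summable (\<lambda>m. q ^ (m\<^sup>2))"
  by (rule summable_comparison_test'[OF summable_geometric[of q]])
    (use assms in \<open>auto intro!: power_decreasing simp: power2_eq_square\<close>)

lemma theta4_sums:
  fixes q y :: real
  assumes "0 \<le> q" "q < 1"
  shows "(\<lambda>m. (if m = 0 then 1 else 2) * ((-1) ^ m * q ^ (m\<^sup>2) * cos (2 * real m * y))) sums theta4 q y"
proof -
  define b where "b m = (-1) ^ m * q ^ (m\<^sup>2) * cos (2 * real m * y)" for m :: nat
  have "summable b"
    by (rule summable_comparison_test'[OF summable_power_square[OF assms]])
      (use assms in \<open>simp add: b_def abs_mult mult_left_le\<close>)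
  then have "(\<lambda>m. 2 * b (Suc m)) sums (2 * (\<Sum>m. b (Suc m)))"
    by (intro sums_mult summable_sums) (simp add: summable_Suc_iff)
  then have "(\<lambda>m. (if m = 0 then 1 else 2) * b m) sums (2 * (\<Sum>m. b (Suc m)) + 1)"
    using sums_Suc_iff[of "\<lambda>m. (if m = 0 then 1 else 2) * b m"] by (simp add: b_def)
  then show ?thesis
    unfolding theta4_def by (simp add: b_def Let_def add.commute)
qed

text \<open>The finite
  identity passes to the limit termwise by Tannery's theorem, the Gaussian binomial coefficients
  being uniformly bounded.\<close>

lemma theta4_triple_product:
  fixes q y :: real
  assumes q: "0 < q" "q < 1" and P: "q_pochhammer (q^2) \<longlonglongrightarrow> P" "0 < P"
  shows "(\<lambda>n. \<Prod>j<n. 1 - 2 * q ^ (2 * j + 1) * cos (2 * y) + q ^ (4 * j + 2)) \<longlonglongrightarrow> theta4 q y / P"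
proof -
  define Q where "Q = q^2"
  have Q: "0 < Q" "Q < 1"
    using q unfolding Q_def by (auto simp: power_less_one_iff)
  define G where "G = exp (1 / (1 - Q)^2)"
  define b where "b m = (-1) ^ m * q ^ (m^2) * cos (2 * real m * y)" for m :: nat
  define a where "a m n = (if m \<le> n then (gauss_binomial Q (2 * n) (n + m)
      + (if m = 0 then 0 else gauss_binomial Q (2 * n) (n - m))) * b m else 0)" for m n :: nat
  define c where "c m = (if m = 0 then 1 else 2) * b m / P" for m :: nat
  have lim: "(\<lambda>n. a m n) \<longlonglongrightarrow> c m" for m
  proof -
    have "(\<lambda>n. (gauss_binomial Q (2 * n) (n + m)
        + (if m = 0 then 0 else gauss_binomial Q (2 * n) (n - m))) * b m) \<longlonglongrightarrow> c m"
      using gauss_binomial_central_tendsto[OF Q P[folded Q_def], of m] unfolding c_def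
      by (cases "m = 0") (auto intro!: tendsto_eq_intros)
    moreover have "eventually (\<lambda>n. (gauss_binomial Q (2 * n) (n + m)
        + (if m = 0 then 0 else gauss_binomial Q (2 * n) (n - m))) * b m = a m n) sequentially"
      unfolding a_def by (intro eventually_sequentiallyI[of m]) simp
    ultimately show ?thesis
      by (rule Lim_transform_eventually)
  qed
  have bound: "norm (a m n) \<le> 2 * G * q ^ (m^2)" for m n
  proof (cases "m \<le> n")
    case True
    have "0 \<le> gauss_binomial Q N i" "gauss_binomial Q N i \<le> G" for N i
      using gauss_binomial_nonneg[of Q N i] gauss_binomial_le[OF Q, of N i] Q unfolding G_def by auto
    then have "\<bar>gauss_binomial Q (2 * n) (n + m) + (if m = 0 then 0 else gauss_binomial Q (2 * n) (n - m))\<bar> \<le> 2 * G"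
      by (smt (verit))
    moreover have "\<bar>b m\<bar> \<le> q ^ (m^2)"
      unfolding b_def using q by (simp add: abs_mult mult_left_le)
    ultimately show ?thesis
      unfolding a_def using True by (simp add: abs_mult mult_mono)
  qed (use q in \<open>simp add: a_def G_def\<close>)
  have "summable (\<lambda>m. 2 * G * q ^ (m^2))"
    using summable_power_square[of q] q by (intro summable_mult) simp
  moreover have "eventually (\<lambda>(m, n). norm (a m n) \<le> 2 * G * q ^ (m^2)) (at_top \<times>\<^sub>F sequentially)"
    using bound by (intro always_eventually) auto
  ultimately have "(\<lambda>n. \<Sum>m. a m n) \<longlonglongrightarrow> (\<Sum>m. c m)"
    using tannerys_theorem[OF lim] by simp
  moreover have "(\<Sum>m. a m n) = (\<Prod>j<n. 1 - 2 * q ^ (2 * j + 1) * cos (2 * y) + q ^ (4 * j + 2))" for n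
  proof -
    have "(\<Sum>m. a m n) = (\<Sum>m\<le>n. a m n)"
      by (rule suminf_finite) (auto simp: a_def)
    also have "\<dots> = (\<Sum>m\<le>n. (gauss_binomial Q (2 * n) (n + m)
        + (if m = 0 then 0 else gauss_binomial Q (2 * n) (n - m))) * b m)"
      by (intro sum.cong) (auto simp: a_def)
    also have "\<dots> = (\<Prod>j<n. 1 - 2 * q ^ (2 * j + 1) * cos (2 * y) + q ^ (4 * j + 2))"
      unfolding b_def Q_def using q by (intro finite_triple_product_theta4[symmetric]) auto
    finally show ?thesis .
  qed
  moreover have "(\<Sum>m. c m) = theta4 q y / P"
    using sums_divide[OF theta4_sums[of q y], of P] q unfolding c_def b_def by (simp add: sums_iff)
  ultimately show ?thesis
    by simp
qed

lemma theta4_pos: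
  fixes q y :: real
  assumes "0 < q" "q < 1"
  shows "0 < theta4 q y"
proof -
  have "0 \<le> q^2" "q^2 < 1"
    using assms by (auto simp: power_less_one_iff)
  then obtain P where P: "q_pochhammer (q^2) \<longlonglongrightarrow> P" "0 < P"
    by (rule q_pochhammer_tendsto)
  have "exp (- (1 / (1 - q)^2))^2 \<le> theta4 q y / P"
    using theta4_partial_product_ge[OF assms]
    by (intro LIMSEQ_le_const[OF theta4_triple_product[OF assms P]]) blast
  then have "0 < theta4 q y / P"
    by (smt (verit) exp_gt_zero zero_less_power)
  then show ?thesis
    using P(2) by (simp add: zero_less_divide_iff)
qed

section \<open>Jacobi elliptic functions\<close>

definition ell_integrand :: "real \<Rightarrow> real \<Rightarrow> real" where
  "ell_integrand k t = 1 / sqrt (1 - k\<^sup>2 * (sin t)\<^sup>2)"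

definition jcn :: "real \<Rightarrow> real \<Rightarrow> real" where
  "jcn k u = cos (jam k u)"

definition jdn :: "real \<Rightarrow> real \<Rightarrow> real" where
  "jdn k u = sqrt (1 - k\<^sup>2 * (jsn k u)\<^sup>2)"

lemma ellF_eq_integral:
  "ellF k p = (if 0 \<le> p then integral {0..p} (ell_integrand k) else - integral {p..0} (ell_integrand k))"
  unfolding ellF_def ell_integrand_def ..

lemma ellK_eq_ellF: "ellK k = ellF k (pi / 2)"
  unfolding ellK_def ellF_def by simp

context
  fixes k :: real
  assumes k: "0 \<le> k" "k < 1"
begin

lemma ell_radicand_pos: "0 < 1 - k\<^sup>2 * (sin t)\<^sup>2"
proof -
  have "k\<^sup>2 * (sin t)\<^sup>2 \<le> k\<^sup>2"
    by (simp add: mult_left_le abs_square_le_1)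
  moreover have "k\<^sup>2 < 1"
    using k by (simp add: power_less_one_iff)
  ultimately show ?thesis
    by simp
qed

lemma ell_integrand_pos: "0 < ell_integrand k t"
  unfolding ell_integrand_def using ell_radicand_pos by simp

lemma ell_integrand_ge_1: "1 \<le> ell_integrand k t"
  unfolding ell_integrand_def using ell_radicand_pos[of t] by (simp add: field_simps)

lemma continuous_on_ell_integrand: "continuous_on S (ell_integrand k)"
  unfolding ell_integrand_def using ell_radicand_pos by (intro continuous_intros) (auto simp: less_le)

lemma ell_integrand_minus: "ell_integrand k (- t) = ell_integrand k t"
  unfolding ell_integrand_def by simp

lemma DERIV_ellF: "(ellF k has_real_derivative ell_integrand k p) (at p)"
proof -
  define a where "a = - \<bar>p\<bar> - 1"
  define b where "b = \<bar>p\<bar> + 1"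
  define G where "G x = integral {a..x} (ell_integrand k)" for x
  have ap: "a < p" "p < b" "a < 0" unfolding a_def b_def by auto
  have int: "ell_integrand k integrable_on {c..d}" for c d by (rule integrable_continuous_interval[OF continuous_on_ell_integrand])
  have "(G has_real_derivative ell_integrand k p) (at p within {a..b})"
    unfolding G_def by (rule integral_has_real_derivative[OF continuous_on_ell_integrand]) (use ap in auto)
  then have dG: "(G has_real_derivative ell_integrand k p) (at p)" using at_within_Icc_at[OF ap(1) ap(2)] by simp
  have dG2: "((\<lambda>x. G x - G 0) has_real_derivative ell_integrand k p) (at p)"
    using DERIV_diff[OF dG DERIV_const[of "G 0"]] by simp
  have eq: "G x - G 0 = ellF k x" if "x \<in> {a<..}" for x
  proof (cases "0 \<le> x")
    case True
    have "integral {a..0} (ell_integrand k) + integral {0..x} (ell_integrand k) = integral {a..x} (ell_integrand k)"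
      by (rule Henstock_Kurzweil_Integration.integral_combine) (use ap True int in auto)
    then show ?thesis unfolding G_def ellF_eq_integral using True by simp
  next
    case False
    have "integral {a..x} (ell_integrand k) + integral {x..0} (ell_integrand k) = integral {a..0} (ell_integrand k)"
      by (rule Henstock_Kurzweil_Integration.integral_combine) (use that False int in auto)
    then show ?thesis unfolding G_def ellF_eq_integral using False by simp
  qed
  show ?thesis
    by (rule has_field_derivative_transform_within_open[OF dG2, of "{a<..}"]) (use ap eq in auto)
qed

lemma isCont_ellF: "isCont (ellF k) p" using DERIV_ellF by (rule DERIV_isCont)

lemma ellF_0: "ellF k 0 = 0" unfolding ellF_eq_integral by simp

lemma ellF_strict_mono: "x < y \<Longrightarrow> ellF k x < ellF k y"
  by (rule DERIV_pos_imp_increasing[of x y "ellF k"]) (use DERIV_ellF ell_integrand_pos in blast)+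

lemma ellF_le_iff: "ellF k x \<le> ellF k y \<longleftrightarrow> x \<le> y"
proof
  assume "ellF k x \<le> ellF k y"
  then show "x \<le> y" using ellF_strict_mono[of y x] by (meson linorder_not_le)
next
  assume "x \<le> y"
  then show "ellF k x \<le> ellF k y" using ellF_strict_mono[of x y] by (cases "x = y") auto
qed

lemma ellF_eq_iff: "ellF k x = ellF k y \<longleftrightarrow> x = y"
  using ellF_le_iff by (metis order_antisym order_refl)

lemma ellF_ge_self: "0 \<le> p \<Longrightarrow> p \<le> ellF k p"
proof -
  assume p: "0 \<le> p"
  have "(\<lambda>x. ellF k x - x) 0 \<le> (\<lambda>x. ellF k x - x) p"
  proof (rule DERIV_nonneg_imp_nondecreasing[OF p])
    fix x show "\<exists>y. ((\<lambda>x. ellF k x - x) has_real_derivative y) (at x) \<and> 0 \<le> y"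
      using DERIV_diff[OF DERIV_ellF DERIV_ident] ell_integrand_ge_1 by force
  qed
  then show ?thesis using ellF_0 by simp
qed

lemma ellF_le_self: "p \<le> 0 \<Longrightarrow> ellF k p \<le> p"
proof -
  assume p: "p \<le> 0"
  have "(\<lambda>x. ellF k x - x) p \<le> (\<lambda>x. ellF k x - x) 0"
  proof (rule DERIV_nonneg_imp_nondecreasing[OF p])
    fix x show "\<exists>y. ((\<lambda>x. ellF k x - x) has_real_derivative y) (at x) \<and> 0 \<le> y"
      using DERIV_diff[OF DERIV_ellF DERIV_ident] ell_integrand_ge_1 by force
  qed
  then show ?thesis using ellF_0 by simp
qed

lemma ellF_surj: "\<exists>p. ellF k p = u"
proof -
  have "ellF k (-\<bar>u\<bar>) \<le> u" using ellF_le_self[of "-\<bar>u\<bar>"] by simp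
  moreover have "u \<le> ellF k \<bar>u\<bar>" using ellF_ge_self[of "\<bar>u\<bar>"] by simp
  ultimately show ?thesis using IVT[of "ellF k" "-\<bar>u\<bar>" u "\<bar>u\<bar>"] isCont_ellF by auto
qed

lemma ellF_jam: "ellF k (jam k u) = u"
proof -
  obtain p where p: "ellF k p = u" using ellF_surj by blast
  have "ellF k (THE p. ellF k p = u) = u"
    by (rule theI[of _ p]) (use p ellF_eq_iff in auto)
  then show ?thesis unfolding jam_def .
qed

lemma jam_ellF: "jam k (ellF k p) = p"
  using ellF_jam[of "ellF k p"] ellF_eq_iff by blast

lemma isCont_jam: "isCont (jam k) u"
proof -
  have "isCont (jam k) (ellF k (jam k u))"
    by (rule isCont_inverse_function[where d=1]) (auto simp: jam_ellF isCont_ellF)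
  then show ?thesis by (simp add: ellF_jam)
qed

lemma DERIV_jam: "(jam k has_real_derivative sqrt (1 - k\<^sup>2 * (sin (jam k u))\<^sup>2)) (at u)"
proof -
  have "(jam k has_real_derivative inverse (ell_integrand k (jam k u))) (at u)"
    by (rule DERIV_inverse_function[where f="ellF k" and a="u-1" and b="u+1"])
       (auto simp: DERIV_ellF ellF_jam isCont_jam less_imp_neq[OF ell_integrand_pos, symmetric])
  then show ?thesis unfolding ell_integrand_def by simp
qed

lemma jam_0: "jam k 0 = 0" using jam_ellF[of 0] ellF_0 by simp

lemma ellF_minus: "ellF k (-p) = - ellF k p"
proof -
  have d: "((\<lambda>x. ellF k x + ellF k (-x)) has_real_derivative 0) (at x)" for x
  proof -
    have "((\<lambda>x. ellF k x + ellF k (-x)) has_real_derivative ell_integrand k x + ell_integrand k (-x) * (-1)) (at x)"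
      by (intro DERIV_add DERIV_chain2[OF DERIV_ellF] DERIV_minus DERIV_ident DERIV_ellF)
    then show ?thesis using ell_integrand_minus by simp
  qed
  have "ellF k p + ellF k (-p) = ellF k 0 + ellF k (-0)"
    using DERIV_isconst_all[of "\<lambda>x. ellF k x + ellF k (-x)"] d by blast
  then show ?thesis using ellF_0 by simp
qed

lemma jam_minus: "jam k (-u) = - jam k u"
proof -
  have "ellF k (- jam k u) = -u" using ellF_minus ellF_jam by simp
  then show ?thesis using jam_ellF by metis
qed

lemma jam_le_iff: "jam k x \<le> jam k y \<longleftrightarrow> x \<le> y"
  by (metis ellF_jam ellF_le_iff)

lemma jam_ellK: "jam k (ellK k) = pi/2"
  unfolding ellK_eq_ellF by (rule jam_ellF)

lemma jdn_pos: "0 < jdn k u"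
  unfolding jdn_def jsn_def using ell_radicand_pos by simp

lemma jdn_square: "(jdn k u)\<^sup>2 = 1 - k\<^sup>2 * (jsn k u)\<^sup>2"
  unfolding jdn_def jsn_def using ell_radicand_pos[of "jam k u"] by simp

lemma jcn_square: "(jcn k u)\<^sup>2 = 1 - (jsn k u)\<^sup>2"
  unfolding jcn_def jsn_def by (simp add: cos_squared_eq)

lemma jsn_square_le_1: "(jsn k u)\<^sup>2 \<le> 1"
  unfolding jsn_def by (simp add: abs_square_le_1)

lemma DERIV_jsn: "(jsn k has_real_derivative jcn k u * jdn k u) (at u)"
  unfolding jsn_def[abs_def] jcn_def jdn_def using DERIV_chain2[OF DERIV_sin DERIV_jam] by simp

lemma DERIV_jcn: "(jcn k has_real_derivative - jsn k u * jdn k u) (at u)"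
  unfolding jsn_def jcn_def[abs_def] jdn_def using DERIV_chain2[OF DERIV_cos DERIV_jam] by simp

lemma DERIV_jdn: "(jdn k has_real_derivative - k\<^sup>2 * jsn k u * jcn k u) (at u)"
proof -
  have h: "((\<lambda>u. 1 - k\<^sup>2 * (jsn k u)\<^sup>2) has_real_derivative - (k\<^sup>2 * (2 * jsn k u * (jcn k u * jdn k u)))) (at u)"
    by (rule derivative_eq_intros DERIV_jsn refl | simp add: power2_eq_square algebra_simps)+
  have "((\<lambda>u. sqrt (1 - k\<^sup>2 * (jsn k u)\<^sup>2)) has_real_derivative
      inverse (sqrt (1 - k\<^sup>2 * (jsn k u)\<^sup>2)) / 2 * - (k\<^sup>2 * (2 * jsn k u * (jcn k u * jdn k u)))) (at u)"
    by (rule DERIV_chain2[OF DERIV_real_sqrt h]) (use jdn_pos in \<open>simp add: jdn_def\<close>)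
  then show ?thesis
    using jdn_pos[of u] unfolding jdn_def[symmetric] by (simp add: jdn_def[abs_def] field_simps)
qed

declare DERIV_jsn[THEN DERIV_chain2, derivative_intros]
  and DERIV_jcn[THEN DERIV_chain2, derivative_intros]
  and DERIV_jdn[THEN DERIV_chain2, derivative_intros]

lemma jsn_0 [simp]: "jsn k 0 = 0"
  unfolding jsn_def by (simp add: jam_0)

lemma jcn_0 [simp]: "jcn k 0 = 1"
  unfolding jcn_def by (simp add: jam_0)

lemma jdn_0 [simp]: "jdn k 0 = 1"
  unfolding jdn_def by simp

lemma jsn_minus: "jsn k (- u) = - jsn k u"
  unfolding jsn_def by (simp add: jam_minus)

lemma jcn_minus: "jcn k (- u) = jcn k u"
  unfolding jcn_def by (simp add: jam_minus)

lemma jdn_minus: "jdn k (- u) = jdn k u"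
  unfolding jdn_def by (simp add: jsn_minus)

lemma jsn_add_denominator_pos: "0 < 1 - k\<^sup>2 * (jsn k u)\<^sup>2 * (jsn k v)\<^sup>2"
proof -
  have "k\<^sup>2 * (jsn k u)\<^sup>2 * (jsn k v)\<^sup>2 \<le> k\<^sup>2 * (jsn k u)\<^sup>2"
    using jsn_square_le_1[of v] by (simp add: mult_left_le)
  also have "\<dots> < 1"
    using ell_radicand_pos[of "jam k u"] by (simp add: jsn_def)
  finally show ?thesis
    by simp
qed

text \<open>The right-hand side, as a function of u with u + v fixed, has derivative zero.\<close>

theorem jsn_add:
  "jsn k (u + v) = (jsn k u * jcn k v * jdn k v + jsn k v * jcn k u * jdn k u)
                   / (1 - k\<^sup>2 * (jsn k u)\<^sup>2 * (jsn k v)\<^sup>2)"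
proof -
  define s where "s = u + v"
  define g where "g t = (jsn k t * jcn k (s - t) * jdn k (s - t) + jsn k (s - t) * jcn k t * jdn k t)
                        / (1 - k\<^sup>2 * (jsn k t)\<^sup>2 * (jsn k (s - t))\<^sup>2)" for t
  have "(g has_real_derivative 0) (at t)" for t
  proof -
    define s1 c1 d1 s2 c2 d2 where "s1 = jsn k t" and "c1 = jcn k t" and "d1 = jdn k t"
      and "s2 = jsn k (s - t)" and "c2 = jcn k (s - t)" and "d2 = jdn k (s - t)"
    note defs = this
    have "c1\<^sup>2 = 1 - s1\<^sup>2" "d1\<^sup>2 = 1 - k\<^sup>2 * s1\<^sup>2" "c2\<^sup>2 = 1 - s2\<^sup>2" "d2\<^sup>2 = 1 - k\<^sup>2 * s2\<^sup>2"
      unfolding defs by (simp_all add: jcn_square jdn_square)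
    then have alg: "(c1 * d1 * (c2 * d2) + s1 * (s2 * d2) * d2 + s1 * c2 * (k\<^sup>2 * s2 * c2) - c2 * d2 * (c1 * d1)
          + s2 * (- s1 * d1) * d1 + s2 * c1 * (- k\<^sup>2 * s1 * c1)) * (1 - k\<^sup>2 * s1\<^sup>2 * s2\<^sup>2)
        = (s1 * c2 * d2 + s2 * c1 * d1) * (- k\<^sup>2 * (2 * s1 * (c1 * d1) * s2\<^sup>2 + s1\<^sup>2 * (2 * s2 * (- (c2 * d2)))))"
      by algebra
    have den: "1 - k\<^sup>2 * s1\<^sup>2 * s2\<^sup>2 \<noteq> 0"
      using jsn_add_denominator_pos[of t "s - t"] unfolding defs by simp
    show ?thesis
      unfolding g_def
      apply (rule derivative_eq_intros refl | simp)+
      subgoal using den by (simp add: defs)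
      unfolding defs[symmetric]
      apply (rule divide_eq_0_iff[THEN iffD2], rule disjI1)
      apply (simp add: power2_eq_square)
      using alg[unfolded power2_eq_square] by algebra
  qed
  then have "g u = g 0"
    using DERIV_isconst_all by blast
  then show ?thesis
    unfolding g_def s_def by simp
qed

text \<open>The derivative of the addition theorem with respect to u.\<close>

lemma jcn_jdn_add:
  "jcn k (u + v) * jdn k (u + v) =
     ((jcn k u * jdn k u * jcn k v * jdn k v - jsn k u * jsn k v * ((jdn k u)\<^sup>2 + k\<^sup>2 * (jcn k u)\<^sup>2))
        * (1 - k\<^sup>2 * (jsn k u)\<^sup>2 * (jsn k v)\<^sup>2)
      + 2 * k\<^sup>2 * jsn k u * jcn k u * jdn k u * (jsn k v)\<^sup>2
        * (jsn k u * jcn k v * jdn k v + jsn k v * jcn k u * jdn k u))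
     / (1 - k\<^sup>2 * (jsn k u)\<^sup>2 * (jsn k v)\<^sup>2)\<^sup>2"
proof -
  define s1 c1 d1 s2 c2 d2 where "s1 = jsn k u" and "c1 = jcn k u" and "d1 = jdn k u"
    and "s2 = jsn k v" and "c2 = jcn k v" and "d2 = jdn k v"
  note defs = this
  have D: "1 - k\<^sup>2 * s1\<^sup>2 * s2\<^sup>2 \<noteq> 0"
    using jsn_add_denominator_pos[of u v] unfolding defs by simp
  have "((\<lambda>w. jsn k (w + v)) has_real_derivative jcn k (u + v) * jdn k (u + v) * (1 + 0)) (at u)"
    by (rule DERIV_chain2[OF DERIV_jsn DERIV_add[OF DERIV_ident DERIV_const]])
  moreover have "((\<lambda>w. (jsn k w * (c2 * d2) + s2 * (jcn k w * jdn k w)) / (1 - k\<^sup>2 * (jsn k w)\<^sup>2 * s2\<^sup>2))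
      has_real_derivative
     ((s1 * 0 + c1 * d1 * (c2 * d2) + s2 * (c1 * (- k\<^sup>2 * s1 * c1) + (- s1 * d1) * d1))
        * (1 - k\<^sup>2 * s1\<^sup>2 * s2\<^sup>2)
      - (s1 * (c2 * d2) + s2 * (c1 * d1)) * (0 - k\<^sup>2 * (of_nat 2 * (c1 * d1 * s1 ^ (2 - Suc 0))) * s2\<^sup>2))
     / ((1 - k\<^sup>2 * s1\<^sup>2 * s2\<^sup>2) * (1 - k\<^sup>2 * s1\<^sup>2 * s2\<^sup>2))) (at u)"
    unfolding defs using D[unfolded defs]
    by (intro DERIV_divide DERIV_add DERIV_mult' DERIV_cmult DERIV_const DERIV_diff DERIV_cmult_right
        DERIV_power DERIV_jsn DERIV_jcn DERIV_jdn)
  moreover have "(\<lambda>w. jsn k (w + v))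
      = (\<lambda>w. (jsn k w * (c2 * d2) + s2 * (jcn k w * jdn k w)) / (1 - k\<^sup>2 * (jsn k w)\<^sup>2 * s2\<^sup>2))"
    unfolding defs jsn_add by (simp add: mult_ac)
  ultimately have "jcn k (u + v) * jdn k (u + v)
      = ((s1 * 0 + c1 * d1 * (c2 * d2) + s2 * (c1 * (- k\<^sup>2 * s1 * c1) + (- s1 * d1) * d1))
        * (1 - k\<^sup>2 * s1\<^sup>2 * s2\<^sup>2)
      - (s1 * (c2 * d2) + s2 * (c1 * d1)) * (0 - k\<^sup>2 * (of_nat 2 * (c1 * d1 * s1 ^ (2 - Suc 0))) * s2\<^sup>2))
     / ((1 - k\<^sup>2 * s1\<^sup>2 * s2\<^sup>2) * (1 - k\<^sup>2 * s1\<^sup>2 * s2\<^sup>2))"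
    using DERIV_unique by fastforce
  also have "\<dots> = ((c1 * d1 * c2 * d2 - s1 * s2 * (d1\<^sup>2 + k\<^sup>2 * c1\<^sup>2)) * (1 - k\<^sup>2 * s1\<^sup>2 * s2\<^sup>2)
      + 2 * k\<^sup>2 * s1 * c1 * d1 * s2\<^sup>2 * (s1 * c2 * d2 + s2 * c1 * d1)) / (1 - k\<^sup>2 * s1\<^sup>2 * s2\<^sup>2)\<^sup>2"
    by (simp add: power2_eq_square algebra_simps)
  finally show ?thesis
    unfolding defs .
qed

lemma jsn_double: "jsn k (2 * u) = 2 * jsn k u * jcn k u * jdn k u / (1 - k\<^sup>2 * (jsn k u)^4)"
  unfolding mult_2 jsn_add by (intro arg_cong2[where f = "(/)"]) algebra+

lemma jcn_jdn_double:
  "jcn k (2 * u) * jdn k (2 * u) =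
     (((jcn k u)\<^sup>2 * (jdn k u)\<^sup>2 - (jsn k u)\<^sup>2 * (jdn k u)\<^sup>2 - k\<^sup>2 * (jsn k u)\<^sup>2 * (jcn k u)\<^sup>2)
        * (1 - k\<^sup>2 * (jsn k u)^4)
      + 4 * k\<^sup>2 * (jsn k u)^4 * (jcn k u)\<^sup>2 * (jdn k u)\<^sup>2)
     / (1 - k\<^sup>2 * (jsn k u)^4)\<^sup>2"
  unfolding mult_2 jcn_jdn_add by (intro arg_cong2[where f = "(/)"]) algebra+

end

section \<open>The cnoidal wave\<close>

lemma DERIV_cnoidal:
  fixes X W :: "real \<Rightarrow> real"
  assumes X: "\<And>x. (X has_real_derivative W x) (at x)" and D: "\<And>x. a - e * (X x)\<^sup>2 \<noteq> 0"
  shows "((\<lambda>x. m / (a - e * (X x)\<^sup>2) - S) has_real_derivative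
           2 * m * e * X x * W x / (a - e * (X x)\<^sup>2)\<^sup>2) (at x)"
proof -
  have "((\<lambda>x. m / (a - e * (X x)\<^sup>2) - S) has_real_derivative
      (0 * (a - e * (X x)\<^sup>2) - m * (0 - e * (of_nat 2 * (W x * X x ^ (2 - Suc 0)))))
        / ((a - e * (X x)\<^sup>2) * (a - e * (X x)\<^sup>2)) - 0) (at x)"
    by (intro DERIV_diff DERIV_divide DERIV_const DERIV_cmult DERIV_power X D)
  then show ?thesis
    by (rule DERIV_cong) (simp add: power2_eq_square)
qed

lemma DERIV_cnoidal_deriv:
  fixes X W V :: "real \<Rightarrow> real"
  assumes X: "\<And>x. (X has_real_derivative W x) (at x)" and W: "\<And>x. (W has_real_derivative V x) (at x)"
    and D: "\<And>x. a - e * (X x)\<^sup>2 \<noteq> 0"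
  shows "((\<lambda>x. 2 * m * e * X x * W x / (a - e * (X x)\<^sup>2)\<^sup>2) has_real_derivative
     2 * m * e * (((W x)\<^sup>2 + X x * V x) * (a - e * (X x)\<^sup>2) + 4 * e * (X x)\<^sup>2 * (W x)\<^sup>2)
       / (a - e * (X x)\<^sup>2) ^ 3) (at x)"
proof -
  have "((\<lambda>x. 2 * m * e * X x * W x / (a - e * (X x)\<^sup>2)\<^sup>2) has_real_derivative
      ((2 * m * e * X x * V x + 2 * m * e * W x * W x) * (a - e * (X x)\<^sup>2)\<^sup>2
        - 2 * m * e * X x * W x
          * (of_nat 2 * ((0 - e * (of_nat 2 * (W x * X x ^ (2 - Suc 0)))) * (a - e * (X x)\<^sup>2) ^ (2 - Suc 0))))
      / ((a - e * (X x)\<^sup>2)\<^sup>2 * (a - e * (X x)\<^sup>2)\<^sup>2)) (at x)"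
    using D[of x] DERIV_mult'[OF DERIV_cmult[OF X, of "2 * m * e"] W]
    by (intro DERIV_divide DERIV_power DERIV_diff DERIV_const DERIV_cmult X) (simp_all add: mult.assoc)
  moreover have "((2 * m * e * x0 * v + 2 * m * e * w * w) * d\<^sup>2
        - 2 * m * e * x0 * w * (of_nat 2 * ((0 - e * (of_nat 2 * (w * x0 ^ (2 - Suc 0)))) * d ^ (2 - Suc 0))))
      / (d\<^sup>2 * d\<^sup>2) = 2 * m * e * ((w\<^sup>2 + x0 * v) * d + 4 * e * x0\<^sup>2 * w\<^sup>2) / d ^ 3"
    if "d \<noteq> 0" for x0 v w d :: real
    using that by (simp add: field_simps power2_eq_square power3_eq_cube)
  ultimately show ?thesis
    using D[of x] DERIV_cong by blast
qed

lemma cnoidal_deriv_square: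
  fixes p q r X W :: real
  defines "a \<equiv> p + r" and "e \<equiv> p - q" and "m \<equiv> 2 * (p + r) * (q + r)" and "S \<equiv> p + q + r"
  defines "D \<equiv> a - e * X\<^sup>2"
  assumes W: "W\<^sup>2 = (1 - X\<^sup>2) * ((p\<^sup>2 - r\<^sup>2) - (p\<^sup>2 - q\<^sup>2) * X\<^sup>2)" and D: "D \<noteq> 0"
  shows "(2 * m * e * X * W / D\<^sup>2)\<^sup>2 = (m / D - S)^4 - 2 * (p\<^sup>2 + q\<^sup>2 + r\<^sup>2) * (m / D - S)\<^sup>2
           + 2 * (4 * p * q * r) * (m / D - S) + (q + r - p) * (p - q + r) * (p + q - r) * (- (p + q + r))"
proof -
  define F where "F = m - S * D"
  have "(2 * m * e * X * W / D\<^sup>2)\<^sup>2 = (4 * m\<^sup>2 * e\<^sup>2 * X\<^sup>2 * W\<^sup>2) / D^4"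
    by (simp add: power2_eq_square power4_eq_xxxx field_simps)
  also have "\<dots> = (F^4 - 2 * (p\<^sup>2 + q\<^sup>2 + r\<^sup>2) * F\<^sup>2 * D\<^sup>2 + 2 * (4 * p * q * r) * F * D ^ 3
        + (q + r - p) * (p - q + r) * (p + q - r) * (- (p + q + r)) * D^4) / D^4"
    unfolding W F_def D_def a_def e_def m_def S_def by (rule arg_cong[where f = "\<lambda>t. t / _"]) algebra
  also have "\<dots> = (F / D)^4 - 2 * (p\<^sup>2 + q\<^sup>2 + r\<^sup>2) * (F / D)\<^sup>2 + 2 * (4 * p * q * r) * (F / D)
        + (q + r - p) * (p - q + r) * (p + q - r) * (- (p + q + r))"
    using D by (simp add: field_simps power2_eq_square power3_eq_cube power4_eq_xxxx)
  also have "F / D = m / D - S"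
    unfolding F_def using D by (simp add: field_simps)
  finally show ?thesis .
qed

lemma cnoidal_quartic_bound:
  fixes p q r y y1 :: real
  assumes "0 < r" "r < q" "q < p" "q + r - p \<le> y" "y \<le> p + r - q"
    and y1: "y1\<^sup>2 = y ^ 4 - 2 * (p\<^sup>2 + q\<^sup>2 + r\<^sup>2) * y\<^sup>2 + 2 * (4 * p * q * r) * y
                   + (q + r - p) * (p - q + r) * (p + q - r) * (- (p + q + r))"
  shows "0 < 2 * (p\<^sup>2 + q\<^sup>2 + r\<^sup>2) + 2 * y1 - 2 * y\<^sup>2"
proof -
  define c where "c = 2 * (p\<^sup>2 + q\<^sup>2 + r\<^sup>2)"
  have pos: "0 < p * q + q * r - p * r"
  proof -
    have "0 < p * (q - r)" "0 < q * r"
      using assms by simp_all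
    then show ?thesis
      by (simp add: algebra_simps)
  qed
  have "\<bar>y\<bar> \<le> p + r - q"
    using assms by auto
  then have "\<bar>y\<bar>\<^sup>2 \<le> (p + r - q)\<^sup>2"
    by (rule power_mono) simp
  moreover have "c - 2 * (p + r - q)\<^sup>2 = 4 * (p * q + q * r - p * r)"
    unfolding c_def by (simp add: power2_eq_square algebra_simps)
  ultimately have c_gt: "0 < c - 2 * y\<^sup>2"
    using pos by simp
  \<comment> \<open>the difference of squares below decreases in y and is a positive square at the right end\<close>
  have "(c - 2 * y\<^sup>2)\<^sup>2 - 4 * y1\<^sup>2
      = c\<^sup>2 - 8 * (4 * p * q * r) * y - 4 * ((q + r - p) * (p - q + r) * (p + q - r) * (- (p + q + r)))"
    unfolding y1 c_def by (simp add: power2_eq_square power4_eq_xxxx algebra_simps)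
  moreover have "c\<^sup>2 - 8 * (4 * p * q * r) * (p + r - q)
        - 4 * ((q + r - p) * (p - q + r) * (p + q - r) * (- (p + q + r)))
      = (4 * (p * q + q * r - p * r))\<^sup>2"
    unfolding c_def by (simp add: power2_eq_square algebra_simps)
  moreover have "8 * (4 * p * q * r) * y \<le> 8 * (4 * p * q * r) * (p + r - q)"
    using assms by (intro mult_left_mono) auto
  moreover have "0 < (4 * (p * q + q * r - p * r))\<^sup>2"
    using pos by simp
  moreover have "(2 * y1)\<^sup>2 = 4 * y1\<^sup>2"
    by (simp add: power2_eq_square)
  ultimately have "(2 * y1)\<^sup>2 < (c - 2 * y\<^sup>2)\<^sup>2"
    by linarith
  then have "\<bar>2 * y1\<bar>\<^sup>2 < (c - 2 * y\<^sup>2)\<^sup>2"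
    by simp
  then have "\<bar>2 * y1\<bar> < c - 2 * y\<^sup>2"
    by (rule power2_less_imp_less) (use c_gt in simp)
  then show ?thesis
    unfolding c_def by linarith
qed

lemma cnoidal_reflection_polynomial:
  fixes p q r X :: real
  defines "a \<equiv> p + r" and "e \<equiv> p - q" and "m \<equiv> 2 * (p + r) * (q + r)" and "S \<equiv> p + q + r"
    and "ka \<equiv> p\<^sup>2 - q\<^sup>2" and "n2 \<equiv> p\<^sup>2 - r\<^sup>2"
  defines "R \<equiv> (1 - X\<^sup>2) * (n2 - ka * X\<^sup>2)" and "D \<equiv> a - e * X\<^sup>2" and "M \<equiv> p\<^sup>2 - ka * X\<^sup>2"
  defines "F \<equiv> m - S * D" and "V \<equiv> - X * (n2 + ka - 2 * ka * X\<^sup>2)"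
  defines "A1 \<equiv> 4 * m * e * X * F"
    and "A0 \<equiv> - 2 * m * e * ((R + X * V) * D + 4 * e * X\<^sup>2 * R) - 4 * p * q * r * D ^ 3"
    and "B1 \<equiv> 4 * m * e * X" and "B0 \<equiv> 2 * (p\<^sup>2 + q\<^sup>2 + r\<^sup>2) * D\<^sup>2 - 2 * F\<^sup>2"
    and "H1 \<equiv> 2 * e * p * q * r * X" and "H0 \<equiv> a * M\<^sup>2 - e * (q\<^sup>2 * r\<^sup>2 * X\<^sup>2 + p\<^sup>2 * R)"
  defines "J0 \<equiv> m * M\<^sup>2 - S * H0" and "J1 \<equiv> - S * H1"
  shows "A0 * H0 + A1 * H1 * R + D * (J0 * B0 + J1 * B1 * R) = 0"
    and "A0 * H1 + A1 * H0 + D * (J0 * B1 + J1 * B0) = 0"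
  unfolding assms by algebra+

text \<open>By the addition theorem Y is sn at the shifted argument, so the right-hand side is minus the
  shifted wave times the denominator of the limit.  Clearing denominators and reducing W^2 leaves
  the two polynomial identities above.\<close>

lemma cnoidal_reflection:
  fixes p q r X W :: real
  defines "a \<equiv> p + r" and "e \<equiv> p - q" and "m \<equiv> 2 * (p + r) * (q + r)" and "S \<equiv> p + q + r"
    and "ka \<equiv> p\<^sup>2 - q\<^sup>2" and "n2 \<equiv> p\<^sup>2 - r\<^sup>2"
  defines "D \<equiv> a - e * X\<^sup>2" and "M \<equiv> p\<^sup>2 - ka * X\<^sup>2" and "V \<equiv> - X * (n2 + ka - 2 * ka * X\<^sup>2)"
  defines "Y \<equiv> (q * r * X - p * W) / M"
  assumes W: "W\<^sup>2 = (1 - X\<^sup>2) * (n2 - ka * X\<^sup>2)" and D: "D \<noteq> 0" and M: "M \<noteq> 0"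
    and DY: "a - e * Y\<^sup>2 \<noteq> 0"
  shows "2 * (m / D - S) * (2 * m * e * X * W / D\<^sup>2)
           - 2 * m * e * ((W\<^sup>2 + X * V) * D + 4 * e * X\<^sup>2 * W\<^sup>2) / D ^ 3 - 4 * p * q * r
         = - (m / (a - e * Y\<^sup>2) - S) * (2 * (p\<^sup>2 + q\<^sup>2 + r\<^sup>2) + 2 * (2 * m * e * X * W / D\<^sup>2) - 2 * (m / D - S)\<^sup>2)"
proof -
  define R where "R = (1 - X\<^sup>2) * (n2 - ka * X\<^sup>2)"
  define F where "F = m - S * D"
  define A1 A0 B1 B0 H1 H0 J0 J1 where "A1 = 4 * m * e * X * F"
    and "A0 = - 2 * m * e * ((R + X * V) * D + 4 * e * X\<^sup>2 * R) - 4 * p * q * r * D ^ 3"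
    and "B1 = 4 * m * e * X" and "B0 = 2 * (p\<^sup>2 + q\<^sup>2 + r\<^sup>2) * D\<^sup>2 - 2 * F\<^sup>2"
    and "H1 = 2 * e * p * q * r * X" and "H0 = a * M\<^sup>2 - e * (q\<^sup>2 * r\<^sup>2 * X\<^sup>2 + p\<^sup>2 * R)"
    and "J0 = m * M\<^sup>2 - S * H0" and "J1 = - S * H1"
  note defs = this
  have P0: "A0 * H0 + A1 * H1 * R + D * (J0 * B0 + J1 * B1 * R) = 0"
    and P1: "A0 * H1 + A1 * H0 + D * (J0 * B1 + J1 * B0) = 0"
    unfolding defs R_def F_def D_def M_def V_def a_def e_def m_def S_def ka_def n2_def
    by (rule cnoidal_reflection_polynomial)+
  have W': "W\<^sup>2 = R"
    unfolding W R_def ..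
  have phi: "m / D - S = F / D"
    unfolding F_def using D by (simp add: field_simps)
  have lhs: "2 * (m / D - S) * (2 * m * e * X * W / D\<^sup>2)
      - 2 * m * e * ((W\<^sup>2 + X * V) * D + 4 * e * X\<^sup>2 * W\<^sup>2) / D ^ 3 - 4 * p * q * r = (A1 * W + A0) / D ^ 3"
    unfolding phi defs W' using D by (simp add: field_simps power2_eq_square power3_eq_cube)
  have B: "2 * (p\<^sup>2 + q\<^sup>2 + r\<^sup>2) + 2 * (2 * m * e * X * W / D\<^sup>2) - 2 * (m / D - S)\<^sup>2 = (B1 * W + B0) / D\<^sup>2"
    unfolding phi defs using D by (simp add: field_simps power2_eq_square)
  have "a * M\<^sup>2 - e * (q * r * X - p * W)\<^sup>2 = H0 + H1 * W"
    unfolding defs power2_diff by (simp add: W'[symmetric] power2_eq_square algebra_simps)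
  then have DY': "a - e * Y\<^sup>2 = (H0 + H1 * W) / M\<^sup>2"
    unfolding Y_def using M by (simp add: field_simps power2_eq_square)
  then have H: "H0 + H1 * W \<noteq> 0"
    using DY by simp
  have psi: "m / (a - e * Y\<^sup>2) - S = (J0 + J1 * W) / (H0 + H1 * W)"
    unfolding DY' J0_def J1_def using M H by (simp add: field_simps)
  have "(A1 * W + A0) * (H0 + H1 * W) + D * ((J0 + J1 * W) * (B1 * W + B0))
      = (A0 * H0 + A1 * H1 * R + D * (J0 * B0 + J1 * B1 * R)) + (A0 * H1 + A1 * H0 + D * (J0 * B1 + J1 * B0)) * W
        + (W\<^sup>2 - R) * (A1 * H1 + D * J1 * B1)"
    by (simp add: algebra_simps power2_eq_square)
  then have num: "(A1 * W + A0) * (H0 + H1 * W) + D * ((J0 + J1 * W) * (B1 * W + B0)) = 0"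
    unfolding P0 P1 W' by simp
  have comb: "x / D ^ 3 + u / h * (v / D\<^sup>2) = (x * h + D * (u * v)) / (D ^ 3 * h)" if "h \<noteq> 0" for x u v h
    using that D by (simp add: field_simps power2_eq_square power3_eq_cube)
  have "(A1 * W + A0) / D ^ 3 + (J0 + J1 * W) / (H0 + H1 * W) * ((B1 * W + B0) / D\<^sup>2) = 0"
    unfolding comb[OF H] num by simp
  then show ?thesis
    unfolding lhs B psi by (simp add: eq_neg_iff_add_eq_0)
qed

locale cnoidal_wave =
  fixes z1 z2 z3 k \<nu> \<alpha> :: real
  assumes z3_pos: "0 < z3" and z3_less_z2: "z3 < z2" and z2_less_z1: "z2 < z1"
    and nu_eq: "\<nu> = sqrt (z1\<^sup>2 - z3\<^sup>2)"
    and k_eq: "k = sqrt ((z1\<^sup>2 - z2\<^sup>2) / (z1\<^sup>2 - z3\<^sup>2))"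
    and alpha_pos: "0 < \<alpha>" and alpha_less_ellK: "\<alpha> < ellK k"
    and jsn_alpha: "jsn k \<alpha> = sqrt ((z1 - z3) / (z1 + z2))"
begin

lemma differences_of_squares_pos: "0 < z1\<^sup>2 - z3\<^sup>2" "0 < z1\<^sup>2 - z2\<^sup>2"
  using z3_pos z3_less_z2 z2_less_z1 by (auto intro!: power_strict_mono)

lemma nu_pos: "0 < \<nu>"
  unfolding nu_eq using differences_of_squares_pos by simp

lemma nu_square: "\<nu>\<^sup>2 = z1\<^sup>2 - z3\<^sup>2"
  unfolding nu_eq using differences_of_squares_pos by simp

lemma k_square: "k\<^sup>2 = (z1\<^sup>2 - z2\<^sup>2) / (z1\<^sup>2 - z3\<^sup>2)"
  unfolding k_eq using differences_of_squares_pos by simp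

lemma k_pos: "0 < k" and k_less_1: "k < 1"
  unfolding k_eq using differences_of_squares_pos z3_pos z3_less_z2 by (simp_all add: power_strict_mono)

lemma modulus_bounds: "0 \<le> k" "k < 1"
  using k_pos k_less_1 by simp_all

lemma k_nu_square: "k\<^sup>2 * \<nu>\<^sup>2 = z1\<^sup>2 - z2\<^sup>2"
  unfolding k_square nu_square using differences_of_squares_pos by simp

lemma jsn_jcn_alpha_pos: "0 < jsn k \<alpha>" "0 < jcn k \<alpha>"
proof -
  have "jam k 0 < jam k \<alpha>" "jam k \<alpha> < jam k (ellK k)"
    using jam_le_iff[OF modulus_bounds] alpha_pos alpha_less_ellK by (meson linorder_not_le)+
  then have "0 < jam k \<alpha>" "jam k \<alpha> < pi / 2"
    by (simp_all add: jam_0[OF modulus_bounds] jam_ellK[OF modulus_bounds])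
  then show "0 < jsn k \<alpha>" "0 < jcn k \<alpha>"
    unfolding jsn_def jcn_def by (auto intro: sin_gt_zero cos_gt_zero)
qed

lemma alpha_squares:
  "(jsn k \<alpha>)\<^sup>2 = (z1 - z3) / (z1 + z2)"
  "(jcn k \<alpha>)\<^sup>2 = (z2 + z3) / (z1 + z2)"
  "k\<^sup>2 * (jsn k \<alpha>)\<^sup>2 = (z1 - z2) / (z1 + z3)"
  "(jdn k \<alpha>)\<^sup>2 = (z2 + z3) / (z1 + z3)"
proof -
  have nz: "z1 + z2 \<noteq> 0" "z1 + z3 \<noteq> 0" "z1 - z3 \<noteq> 0"
    using z3_pos z3_less_z2 z2_less_z1 by auto
  show s: "(jsn k \<alpha>)\<^sup>2 = (z1 - z3) / (z1 + z2)"
    unfolding jsn_alpha using z3_pos z3_less_z2 z2_less_z1 by simp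
  show "(jcn k \<alpha>)\<^sup>2 = (z2 + z3) / (z1 + z2)"
    unfolding jcn_square[OF modulus_bounds] s using nz by (simp add: divide_simps)
  have "z1\<^sup>2 - z3\<^sup>2 = (z1 - z3) * (z1 + z3)" "z1\<^sup>2 - z2\<^sup>2 = (z1 - z2) * (z1 + z2)"
    by (simp_all add: power2_eq_square algebra_simps)
  then show ks: "k\<^sup>2 * (jsn k \<alpha>)\<^sup>2 = (z1 - z2) / (z1 + z3)"
    unfolding k_square s using nz by simp
  show "(jdn k \<alpha>)\<^sup>2 = (z2 + z3) / (z1 + z3)"
    unfolding jdn_square[OF modulus_bounds] ks using nz by (simp add: divide_simps)
qed

lemma one_minus_k_jsn_alpha_pow4: "1 - k\<^sup>2 * (jsn k \<alpha>) ^ 4 = 2 * z1 * (z2 + z3) / ((z1 + z3) * (z1 + z2))"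
proof -
  have "1 - k\<^sup>2 * (jsn k \<alpha>) ^ 4 = 1 - (k\<^sup>2 * (jsn k \<alpha>)\<^sup>2) * (jsn k \<alpha>)\<^sup>2"
    by algebra
  also have "\<dots> = 1 - (z1 - z2) / (z1 + z3) * ((z1 - z3) / (z1 + z2))"
    by (unfold alpha_squares(3), unfold alpha_squares(1)) (rule refl)
  also have "\<dots> = 2 * z1 * (z2 + z3) / ((z1 + z3) * (z1 + z2))"
    using z3_pos z3_less_z2 z2_less_z1 by (simp add: divide_simps) algebra
  finally show ?thesis .
qed

lemma jsn_two_alpha: "jsn k (2 * \<alpha>) = \<nu> / z1"
proof -
  have nz: "z1 + z2 \<noteq> 0" "z1 + z3 \<noteq> 0" "z2 + z3 \<noteq> 0" "z1 \<noteq> 0" "z1 \<noteq> z3"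
    using z3_pos z3_less_z2 z2_less_z1 by auto
  have "(jsn k \<alpha> * jcn k \<alpha> * jdn k \<alpha>)\<^sup>2 = (jsn k \<alpha>)\<^sup>2 * (jcn k \<alpha>)\<^sup>2 * (jdn k \<alpha>)\<^sup>2"
    by algebra
  also have "\<dots> = (z1 - z3) / (z1 + z2) * ((z2 + z3) / (z1 + z2)) * ((z2 + z3) / (z1 + z3))"
    by (simp only: alpha_squares)
  also have "\<dots> = (\<nu> * (z2 + z3) / ((z1 + z2) * (z1 + z3)))\<^sup>2"
    unfolding power_mult_distrib power_divide nu_square using nz by (simp add: divide_simps) algebra
  finally have scd: "jsn k \<alpha> * jcn k \<alpha> * jdn k \<alpha> = \<nu> * (z2 + z3) / ((z1 + z2) * (z1 + z3))"
    using jsn_jcn_alpha_pos jdn_pos[OF modulus_bounds, of \<alpha>] nu_pos z3_pos z3_less_z2 z2_less_z1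
    by (subst (asm) power2_eq_iff_nonneg) auto
  have "jsn k (2 * \<alpha>) = 2 * (jsn k \<alpha> * jcn k \<alpha> * jdn k \<alpha>) / (1 - k\<^sup>2 * (jsn k \<alpha>) ^ 4)"
    unfolding jsn_double[OF modulus_bounds] by (simp add: mult.assoc)
  also have "\<dots> = 2 * (\<nu> * (z2 + z3) / ((z1 + z2) * (z1 + z3))) / (2 * z1 * (z2 + z3) / ((z1 + z3) * (z1 + z2)))"
    unfolding scd one_minus_k_jsn_alpha_pow4 ..
  also have "\<dots> = \<nu> / z1"
    using nz by (simp add: divide_simps)
  finally show ?thesis .
qed

lemma jcn_jdn_two_alpha: "jcn k (2 * \<alpha>) * jdn k (2 * \<alpha>) = z2 * z3 / z1\<^sup>2"
proof -
  have nz: "z1 + z2 \<noteq> 0" "z1 + z3 \<noteq> 0" "z2 + z3 \<noteq> 0" "z1 \<noteq> 0"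
    using z3_pos z3_less_z2 z2_less_z1 by auto
  define s c d ks where "s = (jsn k \<alpha>)\<^sup>2" and "c = (jcn k \<alpha>)\<^sup>2" and "d = (jdn k \<alpha>)\<^sup>2"
    and "ks = k\<^sup>2 * (jsn k \<alpha>)\<^sup>2"
  have "1 - ks * s = 1 - k\<^sup>2 * (jsn k \<alpha>) ^ 4"
    unfolding ks_def s_def by algebra
  then have den: "1 - ks * s = 2 * z1 * (z2 + z3) / ((z1 + z3) * (z1 + z2))"
    unfolding one_minus_k_jsn_alpha_pow4 .
  have "jcn k (2 * \<alpha>) * jdn k (2 * \<alpha>) = ((c * d - s * d - ks * c) * (1 - ks * s) + 4 * ks * s * c * d) / (1 - ks * s)\<^sup>2"
    unfolding jcn_jdn_double[OF modulus_bounds] s_def c_def d_def ks_def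
    by (intro arg_cong2[where f = "(/)"]) algebra+
  also have "\<dots> = z2 * z3 / z1\<^sup>2"
    unfolding den unfolding ks_def alpha_squares(3) unfolding s_def c_def d_def alpha_squares
    using nz by (simp add: divide_simps power2_eq_square) algebra
  finally show ?thesis .
qed

lemma jsn_minus_two_alpha:
  "jsn k (w - 2 * \<alpha>) = (z2 * z3 * jsn k w - z1 * (\<nu> * (jcn k w * jdn k w))) / (z1\<^sup>2 - (z1\<^sup>2 - z2\<^sup>2) * (jsn k w)\<^sup>2)"
proof -
  have "jsn k (w - 2 * \<alpha>) = (jsn k w * (z2 * z3 / z1\<^sup>2) + (- (\<nu> / z1)) * (jcn k w * jdn k w))
      / (1 - k\<^sup>2 * (jsn k w)\<^sup>2 * (- (\<nu> / z1))\<^sup>2)"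
    using jsn_add[OF modulus_bounds, of w "- (2 * \<alpha>)"]
    by (simp add: jsn_minus[OF modulus_bounds] jcn_minus[OF modulus_bounds]
        jdn_minus[OF modulus_bounds] jsn_two_alpha mult.assoc
        flip: jcn_jdn_two_alpha)
  also have "\<dots> = (z2 * z3 * jsn k w - z1 * (\<nu> * (jcn k w * jdn k w))) / (z1\<^sup>2 - k\<^sup>2 * \<nu>\<^sup>2 * (jsn k w)\<^sup>2)"
    using z3_pos z3_less_z2 z2_less_z1 by (simp add: divide_simps power2_eq_square) algebra
  finally show ?thesis
    unfolding k_nu_square .
qed

definition wave :: "real \<Rightarrow> real" where
  "wave x = 2 * (z1 + z3) * (z2 + z3) / ((z1 + z3) - (z1 - z2) * (jsn k (\<nu> * x))\<^sup>2) - z1 - z2 - z3"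

definition wave_sn :: "real \<Rightarrow> real" where
  "wave_sn x = jsn k (\<nu> * x)"

definition wave_sn' :: "real \<Rightarrow> real" where
  "wave_sn' x = \<nu> * (jcn k (\<nu> * x) * jdn k (\<nu> * x))"

lemma DERIV_wave_sn: "(wave_sn has_real_derivative wave_sn' x) (at x)"
  unfolding wave_sn_def[abs_def] wave_sn'_def using modulus_bounds
  by (auto intro!: derivative_eq_intros DERIV_jsn[THEN DERIV_chain2])

lemma DERIV_wave_sn':
  "(wave_sn' has_real_derivative
     - wave_sn x * ((z1\<^sup>2 - z3\<^sup>2) + (z1\<^sup>2 - z2\<^sup>2) - 2 * (z1\<^sup>2 - z2\<^sup>2) * (wave_sn x)\<^sup>2)) (at x)"
proof -
  have "(wave_sn' has_real_derivative
      \<nu> * (jcn k (\<nu> * x) * (- k\<^sup>2 * jsn k (\<nu> * x) * jcn k (\<nu> * x) * \<nu>)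
        + (- jsn k (\<nu> * x) * jdn k (\<nu> * x) * \<nu>) * jdn k (\<nu> * x))) (at x)"
    unfolding wave_sn'_def[abs_def]
    by (intro DERIV_cmult DERIV_mult' DERIV_jcn[OF modulus_bounds, THEN DERIV_chain2]
        DERIV_jdn[OF modulus_bounds, THEN DERIV_chain2]
        DERIV_cmult_Id)
  moreover have "\<nu> * (jcn k (\<nu> * x) * (- k\<^sup>2 * jsn k (\<nu> * x) * jcn k (\<nu> * x) * \<nu>)
        + (- jsn k (\<nu> * x) * jdn k (\<nu> * x) * \<nu>) * jdn k (\<nu> * x))
      = - wave_sn x * (\<nu>\<^sup>2 * (jdn k (\<nu> * x))\<^sup>2 + k\<^sup>2 * \<nu>\<^sup>2 * (jcn k (\<nu> * x))\<^sup>2)"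
    unfolding wave_sn_def by (simp add: power2_eq_square algebra_simps)
  moreover have "\<nu>\<^sup>2 * (jdn k (\<nu> * x))\<^sup>2 + k\<^sup>2 * \<nu>\<^sup>2 * (jcn k (\<nu> * x))\<^sup>2
      = (z1\<^sup>2 - z3\<^sup>2) + (z1\<^sup>2 - z2\<^sup>2) - 2 * (z1\<^sup>2 - z2\<^sup>2) * (wave_sn x)\<^sup>2"
    unfolding jdn_square[OF modulus_bounds] jcn_square[OF modulus_bounds] wave_sn_def
      nu_square[symmetric] k_nu_square[symmetric]
    by (simp add: algebra_simps)
  ultimately show ?thesis
    by simp
qed

lemma wave_sn'_square:
  "(wave_sn' x)\<^sup>2 = (1 - (wave_sn x)\<^sup>2) * ((z1\<^sup>2 - z3\<^sup>2) - (z1\<^sup>2 - z2\<^sup>2) * (wave_sn x)\<^sup>2)"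
  unfolding wave_sn'_def wave_sn_def power_mult_distrib jcn_square[OF modulus_bounds]
    jdn_square[OF modulus_bounds] nu_square[symmetric] k_nu_square[symmetric]
  by (simp add: algebra_simps)

lemma wave_denominator_bounds:
  "z2 + z3 \<le> (z1 + z3) - (z1 - z2) * (wave_sn x)\<^sup>2" "(z1 + z3) - (z1 - z2) * (wave_sn x)\<^sup>2 \<le> z1 + z3"
proof -
  have "(wave_sn x)\<^sup>2 \<le> 1"
    unfolding wave_sn_def jsn_def by (simp add: abs_square_le_1)
  then have "(z1 - z2) * (wave_sn x)\<^sup>2 \<le> z1 - z2"
    using z2_less_z1 by (simp add: mult_left_le)
  then show "z2 + z3 \<le> (z1 + z3) - (z1 - z2) * (wave_sn x)\<^sup>2"
    by simp
  show "(z1 + z3) - (z1 - z2) * (wave_sn x)\<^sup>2 \<le> z1 + z3"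
    using z2_less_z1 by simp
qed

lemma wave_denominator_nonzero: "(z1 + z3) - (z1 - z2) * (wave_sn x)\<^sup>2 \<noteq> 0"
  using wave_denominator_bounds(1)[of x] z3_pos z3_less_z2 by linarith

lemma wave_eq: "wave x = 2 * (z1 + z3) * (z2 + z3) / ((z1 + z3) - (z1 - z2) * (wave_sn x)\<^sup>2) - (z1 + z2 + z3)"
  unfolding wave_def wave_sn_def by simp

lemma deriv_wave:
  "deriv wave x = 2 * (2 * (z1 + z3) * (z2 + z3)) * (z1 - z2) * wave_sn x * wave_sn' x
                  / ((z1 + z3) - (z1 - z2) * (wave_sn x)\<^sup>2)\<^sup>2"
  unfolding wave_eq[abs_def]
  by (intro DERIV_imp_deriv DERIV_cnoidal DERIV_wave_sn wave_denominator_nonzero)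

lemma deriv_deriv_wave:
  "deriv (deriv wave) x = 2 * (2 * (z1 + z3) * (z2 + z3)) * (z1 - z2)
     * (((wave_sn' x)\<^sup>2 + wave_sn x
          * (- wave_sn x * ((z1\<^sup>2 - z3\<^sup>2) + (z1\<^sup>2 - z2\<^sup>2) - 2 * (z1\<^sup>2 - z2\<^sup>2) * (wave_sn x)\<^sup>2)))
        * ((z1 + z3) - (z1 - z2) * (wave_sn x)\<^sup>2) + 4 * (z1 - z2) * (wave_sn x)\<^sup>2 * (wave_sn' x)\<^sup>2)
     / ((z1 + z3) - (z1 - z2) * (wave_sn x)\<^sup>2) ^ 3"
  unfolding deriv_wave[abs_def]
  by (intro DERIV_imp_deriv DERIV_cnoidal_deriv DERIV_wave_sn DERIV_wave_sn' wave_denominator_nonzero)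

lemma wave_sn_shift:
  "wave_sn (x - 2 * \<alpha> / \<nu>) = (z2 * z3 * wave_sn x - z1 * wave_sn' x) / (z1\<^sup>2 - (z1\<^sup>2 - z2\<^sup>2) * (wave_sn x)\<^sup>2)"
proof -
  have "\<nu> * (x - 2 * \<alpha> / \<nu>) = \<nu> * x - 2 * \<alpha>"
    using nu_pos by (simp add: field_simps)
  then show ?thesis
    by (simp only: wave_sn_def jsn_minus_two_alpha wave_sn'_def)
qed

lemma wave_reflection:
  "2 * wave x * deriv wave x - deriv (deriv wave) x - 4 * z1 * z2 * z3
     = - wave (x - 2 * \<alpha> / \<nu>) * (2 * (z1\<^sup>2 + z2\<^sup>2 + z3\<^sup>2) + 2 * deriv wave x - 2 * (wave x)\<^sup>2)"
proof -
  have "z1\<^sup>2 - (z1\<^sup>2 - z2\<^sup>2) * (wave_sn x)\<^sup>2 \<noteq> 0"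
  proof -
    have "(z1\<^sup>2 - z2\<^sup>2) * (wave_sn x)\<^sup>2 \<le> z1\<^sup>2 - z2\<^sup>2"
      using differences_of_squares_pos
      by (intro mult_left_le) (auto simp: wave_sn_def jsn_def abs_square_le_1)
    then show ?thesis
      using z3_pos z3_less_z2 by (smt (verit) zero_less_power2)
  qed
  moreover have "(z1 + z3) - (z1 - z2) * ((z2 * z3 * wave_sn x - z1 * wave_sn' x)
                                  / (z1\<^sup>2 - (z1\<^sup>2 - z2\<^sup>2) * (wave_sn x)\<^sup>2))\<^sup>2 \<noteq> 0"
    using wave_denominator_nonzero[of "x - 2 * \<alpha> / \<nu>"] unfolding wave_sn_shift .
  ultimately show ?thesis
    unfolding wave_eq[of x] wave_eq[of "x - 2 * \<alpha> / \<nu>"] wave_sn_shift deriv_wave deriv_deriv_wave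
    by (intro cnoidal_reflection wave_sn'_square wave_denominator_nonzero)
qed

lemma wave_reflection_denominator_pos:
  "0 < 2 * (z1\<^sup>2 + z2\<^sup>2 + z3\<^sup>2) + 2 * deriv wave x - 2 * (wave x)\<^sup>2"
proof (rule cnoidal_quartic_bound[OF z3_pos z3_less_z2 z2_less_z1])
  have "wave x \<le> z1 + z3 - z2 \<and> z2 + z3 - z1 \<le> wave x"
  proof -
    define D where "D = (z1 + z3) - (z1 - z2) * (wave_sn x)\<^sup>2"
    have D: "z2 + z3 \<le> D" "D \<le> z1 + z3" "0 < D"
      unfolding D_def using wave_denominator_bounds[of x] z3_pos z3_less_z2 by auto
    have "2 * (z1 + z3) * (z2 + z3) / D \<le> 2 * (z1 + z3) * (z2 + z3) / (z2 + z3)"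
      "2 * (z1 + z3) * (z2 + z3) / (z1 + z3) \<le> 2 * (z1 + z3) * (z2 + z3) / D"
      using D z3_pos z3_less_z2 z2_less_z1 by (intro divide_left_mono; simp)+
    moreover have "2 * (z1 + z3) * (z2 + z3) / (z2 + z3) = 2 * (z1 + z3)"
      "2 * (z1 + z3) * (z2 + z3) / (z1 + z3) = 2 * (z2 + z3)"
      using z3_pos z3_less_z2 z2_less_z1 by (simp_all add: field_simps)
    ultimately have "2 * (z1 + z3) * (z2 + z3) / D \<le> 2 * (z1 + z3)"
      "2 * (z2 + z3) \<le> 2 * (z1 + z3) * (z2 + z3) / D"
      by simp_all
    then show ?thesis
      unfolding wave_eq D_def[symmetric] by simp
  qed
  then show "z2 + z3 - z1 \<le> wave x" "wave x \<le> z1 + z3 - z2"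
    by auto
  show "(deriv wave x)\<^sup>2 = (wave x) ^ 4 - 2 * (z1\<^sup>2 + z2\<^sup>2 + z3\<^sup>2) * (wave x)\<^sup>2 + 2 * (4 * z1 * z2 * z3) * wave x
      + (z2 + z3 - z1) * (z1 - z2 + z3) * (z1 + z2 - z3) * (- (z1 + z2 + z3))"
    unfolding wave_eq deriv_wave by (intro cnoidal_deriv_square wave_sn'_square wave_denominator_nonzero)
qed

end

lemma ellK_pos: "0 \<le> k \<Longrightarrow> k < 1 \<Longrightarrow> 0 < ellK k"
  using ellF_ge_self[of k "pi / 2"] pi_gt_zero unfolding ellK_eq_ellF by linarith

lemma jacTheta_pos:
  assumes "0 < k" "k < 1"
  shows "0 < jacTheta k x"
proof -
  have "0 < ellK (sqrt (1 - k\<^sup>2))" "0 < ellK k"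
    using assms by (auto intro!: ellK_pos simp: power_less_one_iff power_le_one)
  then have "0 < nome k" "nome k < 1"
    unfolding nome_def by auto
  then show ?thesis
    unfolding jacTheta_def by (rule theta4_pos)
qed

lemma tendsto_exp_weighted_quotient:
  fixes T1 T2 A B f \<eta>0 :: real
  assumes "0 < T1" "0 < T2" "B \<noteq> 0"
  shows "((\<lambda>\<eta>. (4 * f * T1 + exp (2 * (\<eta> + \<eta>0)) * T2 * A) / (4 * T1 + exp (2 * (\<eta> + \<eta>0)) * T2 * B))
           \<longlongrightarrow> f) at_bot"
    and "((\<lambda>\<eta>. (4 * f * T1 + exp (2 * (\<eta> + \<eta>0)) * T2 * A) / (4 * T1 + exp (2 * (\<eta> + \<eta>0)) * T2 * B))
           \<longlongrightarrow> A / B) at_top"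
proof -
  have exp_sq: "exp (2 * (\<eta> + \<eta>0)) = exp (2 * \<eta>0) * exp \<eta> ^ 2" for \<eta> :: real
    by (simp add: power2_eq_square flip: exp_add)
  have "((\<lambda>\<eta>. exp (2 * (\<eta> + \<eta>0))) \<longlongrightarrow> exp (2 * \<eta>0) * 0\<^sup>2) at_bot"
    unfolding exp_sq by (intro tendsto_intros exp_at_bot)
  then have "((\<lambda>\<eta>. (4 * f * T1 + exp (2 * (\<eta> + \<eta>0)) * T2 * A) / (4 * T1 + exp (2 * (\<eta> + \<eta>0)) * T2 * B))
      \<longlongrightarrow> (4 * f * T1 + 0 * T2 * A) / (4 * T1 + 0 * T2 * B)) at_bot"
    using assms by (intro tendsto_intros) auto
  then show "((\<lambda>\<eta>. (4 * f * T1 + exp (2 * (\<eta> + \<eta>0)) * T2 * A) / (4 * T1 + exp (2 * (\<eta> + \<eta>0)) * T2 * B))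
      \<longlongrightarrow> f) at_bot"
    using assms by simp
  have "((\<lambda>\<eta>. inverse (exp (2 * \<eta>0)) * exp (- \<eta>) ^ 2) \<longlongrightarrow> inverse (exp (2 * \<eta>0)) * 0\<^sup>2) at_top"
    by (intro tendsto_intros filterlim_compose[OF exp_at_bot filterlim_uminus_at_bot_at_top])
  then have "((\<lambda>\<eta>. inverse (exp (2 * (\<eta> + \<eta>0)))) \<longlongrightarrow> 0) at_top"
    unfolding exp_sq by (simp add: exp_minus power_inverse)
  then have "((\<lambda>\<eta>. (4 * f * T1 * inverse (exp (2 * (\<eta> + \<eta>0))) + T2 * A)
      / (4 * T1 * inverse (exp (2 * (\<eta> + \<eta>0))) + T2 * B)) \<longlongrightarrow> (4 * f * T1 * 0 + T2 * A) / (4 * T1 * 0 + T2 * B)) at_top"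
    using assms by (intro tendsto_intros) auto
  moreover have "(4 * f * T1 + exp (2 * (\<eta> + \<eta>0)) * T2 * A) / (4 * T1 + exp (2 * (\<eta> + \<eta>0)) * T2 * B)
      = (4 * f * T1 * inverse (exp (2 * (\<eta> + \<eta>0))) + T2 * A)
        / (4 * T1 * inverse (exp (2 * (\<eta> + \<eta>0))) + T2 * B)" for \<eta>
  proof -
    define e where "e = exp (2 * (\<eta> + \<eta>0))"
    have "0 < e"
      unfolding e_def by simp
    then have "4 * f * T1 * inverse e + T2 * A = (4 * f * T1 + e * T2 * A) * inverse e"
      "4 * T1 * inverse e + T2 * B = (4 * T1 + e * T2 * B) * inverse e"
      by (simp_all add: algebra_simps)
    then show ?thesis
      unfolding e_def[symmetric] using \<open>0 < e\<close> by simp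
  qed
  ultimately show "((\<lambda>\<eta>. (4 * f * T1 + exp (2 * (\<eta> + \<eta>0)) * T2 * A) / (4 * T1 + exp (2 * (\<eta> + \<eta>0)) * T2 * B))
      \<longlongrightarrow> A / B) at_top"
    using assms by simp
qed

theorem lemma11:
  fixes z1 z2 z3 \<eta>0 b c \<nu> k \<alpha> s0 \<xi> :: real
    and \<phi> :: "real \<Rightarrow> real" and u :: "real \<Rightarrow> real \<Rightarrow> real"
  assumes "0 < z3" "z3 < z2" "z2 < z1"
    and "b = 4 * z1 * z2 * z3"
    and "c = 2 * (z1\<^sup>2 + z2\<^sup>2 + z3\<^sup>2)"
    and "\<nu> = sqrt (z1\<^sup>2 - z3\<^sup>2)"
    and "k = sqrt ((z1\<^sup>2 - z2\<^sup>2) / (z1\<^sup>2 - z3\<^sup>2))"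
    and "0 < \<alpha>" "\<alpha> < ellK k" "jsn k \<alpha> = sqrt ((z1 - z3) / (z1 + z2))"
    and "\<phi> = (\<lambda>x. 2 * (z1 + z3) * (z2 + z3) / ((z1 + z3) - (z1 - z2) * (jsn k (\<nu> * x))\<^sup>2)
                 - z1 - z2 - z3)"
    and "s0 = \<nu> * deriv (jacH k) (2 * \<alpha>) / jacH k (2 * \<alpha>)"
    and "u = (\<lambda>x t. let \<xi> = x + c * t; \<eta> = s0 * \<xi> - b * t in
           (4 * \<phi> \<xi> * (jacTheta k (\<nu> * \<xi> + \<alpha>))\<^sup>2
             + exp (2 * (\<eta> + \<eta>0)) * (jacTheta k (\<nu> * \<xi> - \<alpha>))\<^sup>2
               * (2 * \<phi> \<xi> * deriv \<phi> \<xi> - deriv (deriv \<phi>) \<xi> - b))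
         / (4 * (jacTheta k (\<nu> * \<xi> + \<alpha>))\<^sup>2
             + exp (2 * (\<eta> + \<eta>0)) * (jacTheta k (\<nu> * \<xi> - \<alpha>))\<^sup>2
               * (c + 2 * deriv \<phi> \<xi> - 2 * (\<phi> \<xi>)\<^sup>2)))"
  shows "((\<lambda>\<eta>. u (\<xi> - c * ((s0 * \<xi> - \<eta>) / b)) ((s0 * \<xi> - \<eta>) / b)) \<longlongrightarrow> \<phi> \<xi>) at_bot
       \<and> ((\<lambda>\<eta>. u (\<xi> - c * ((s0 * \<xi> - \<eta>) / b)) ((s0 * \<xi> - \<eta>) / b))
           \<longlongrightarrow> - \<phi> (\<xi> - 2 * \<alpha> / \<nu>)) at_top"
proof -
  interpret cnoidal_wave z1 z2 z3 k \<nu> \<alpha>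
    using assms(1-3,6-10) by unfold_locales
  have \<phi>: "\<phi> = wave"
    unfolding assms(11) wave_def[abs_def] ..
  define A B where "A = 2 * wave \<xi> * deriv wave \<xi> - deriv (deriv wave) \<xi> - b"
    and "B = c + 2 * deriv wave \<xi> - 2 * (wave \<xi>)\<^sup>2"
  define T1 T2 where "T1 = (jacTheta k (\<nu> * \<xi> + \<alpha>))\<^sup>2" and "T2 = (jacTheta k (\<nu> * \<xi> - \<alpha>))\<^sup>2"
  have T: "0 < T1" "0 < T2"
    unfolding T1_def T2_def using jacTheta_pos[OF k_pos k_less_1] by (simp_all add: less_imp_neq[symmetric])
  have B: "0 < B"
    unfolding B_def assms(5) by (rule wave_reflection_denominator_pos)
  have u: "(\<lambda>\<eta>. u (\<xi> - c * ((s0 * \<xi> - \<eta>) / b)) ((s0 * \<xi> - \<eta>) / b))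
      = (\<lambda>\<eta>. (4 * wave \<xi> * T1 + exp (2 * (\<eta> + \<eta>0)) * T2 * A) / (4 * T1 + exp (2 * (\<eta> + \<eta>0)) * T2 * B))"
  proof -
    have "0 < b"
      unfolding assms(4) using assms(1-3) by simp
    then show ?thesis
      unfolding assms(13) \<phi> Let_def A_def B_def T1_def T2_def by (simp add: mult_ac)
  qed
  have reflection: "- wave (\<xi> - 2 * \<alpha> / \<nu>) = A / B"
    using wave_reflection[of \<xi>] B unfolding A_def B_def assms(4,5) by (simp add: field_simps)
  show ?thesis
    unfolding u \<phi> reflection using B
    by (intro conjI tendsto_exp_weighted_quotient[OF T, where f = "wave \<xi>"]) simp_all
qed

end
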